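(* Fix $s\in\mathbb{N}^+$. If $m$ is sufficiently large (depending on $s$), then for every graph $G$ and all positive integers $r_1,\dots,r_s$ the following holds for the tournament $T_G^\bigstar$: for every $i\in[s]$ there is a constant $a_i>0$ such that for all $x,y\in V(T_G^\bigstar)$, $$t_{x,y}(F_i^{\dagger\bullet\bullet},T_G^\bigstar)=\begin{cases}a_i,& \text{if } (x,y) \text{ or } (y,x) \text{ is an arc of } T_{i*k}[G] \text{ for some } k\in[r_i],\\ 0,&\text{otherwise.}\end{cases}$$ Equivalently, after deleting all-zero rows and columns, the matrix $\big(t_{x,y}(F_i^{\dagger\bullet\bullet},T_G^\bigstar)\big)_{x,y}$ equals $a_i$ times the adjacency matrix of $r_i$ disjoint copies of $G$.
   Context: All digraphs are finite and loopless; a tournament is a digraph in which every pair of distinct vertices is joined by exactly one arc. A homomorphism from a digraph $F$ to a digraph $H$ is a map $\varphi:V(F)\to V(H)$ with $(\varphi(u),\varphi(v))\in E(H)$ whenever $(u,v)\in E(F)$. For a digraph $F$ with two distinguished roots $z,w$ and vertices $x,y$ of $T$, $\hom_{x,y}(F,T)$ is the number of homomorphisms $\varphi:F\to T$ with $\varphi(z)=x,\varphi(w)=y$, and $t_{x,y}(F,T)=\hom_{x,y}(F,T)/|V(T)|^{|V(F)|-2}$. Construction of $F_i^{\bullet\bullet}$: fix $s$, a positive integer $m$, and a tournament $F_0$ on vertex set $[m]$ satisfying: (I) every vertex has out-degree and in-degree at most $2m/3$; (II) there are no disjoint $A_1,A_2\subseteq[m]$ with $|A_1|=|A_2|=\lceil\sqrt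 m\,\rceil$ such that $(a_1,a_2)$ is an arc for all $a_1\in A_1,a_2\in A_2$; (III) for every $S\subseteq[m]$ with $|S|\ge 2m/13-\sqrt m$, $F_0[S]$ contains a directed cycle. Let $k_1,\dots,k_s$ be integers in $(2m/3+2,\,5m/6)$ with $k_i>k_{i+1}+1$. $F_i^{\bullet\bullet}$ is the digraph on $[m]\cup\{z_i,w_i\}$ (roots $z_i,w_i$) whose arcs are the arcs of $F_0$, plus $z_i\to v$, $v\to w_i$ for $1\le v\le k_i$, plus $u\to z_i$, $w_i\to u$ for $k_i<u\le m$. The symmetrization $F_i^{\dagger\bullet\bullet}$ is obtained from two disjoint copies of $F_i^{\bullet\bullet}$, the "left" copy with roots $z^1,w^1$ and the "right" copy with roots $z^2,w^2$, by identifying $z^1$ with $w^2$ (root $z_i$) and $w^1$ with $z^2$ (root $w_i$). Construction of $T_G^\bigstar$: let $G$ be a graph on $[n]$ and $r_1,\dots,r_s\in\mathbb{N}^+$. For $i\in[s]$ the tournament $T_i$ is built as follows. (1) $T_0$ is the transitive tournament on $[n]$ with arcs $a\to b$ for $a<b$; $T_0[G]$ is its sub-digraph with arcs $(a,b)$, $a<b$, $ab\in E(G)$. Order the arcs of $T_0[G]$ by $(x,y)\succ(a,b)$ iff $x+y>a+b$, or $x+y=a+b$ and $x>a$. (2) For each arc $e=(a,b)$ of $T_0[G]$ attach a new copy of $F_i^{\dagger\bullet\bullet}$ with root $z_i$ identified with $a$ and root $w_i$ with $b$ (so in the left copy $\overleftarrow{F_i^e}$ the roots $z,w$ are $a,b$,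 and in the right copy $\overrightarrow{F_i^e}$ they are $b,a$). Let $V_e$ be the $2m$ non-root vertices of this copy and $V_0=\bigcup_e V_e$. (3) Add all arcs $x\to y$ with $x$ a non-root vertex of $\overleftarrow{F_i^e}$ and $y$ a non-root vertex of $\overrightarrow{F_i^e}$. (4) For each arc $e=(a,b)$ of $T_0[G]$ and each $x\in[n]\setminus\{a,b\}$, add arcs $x\to v$ for all $v\in V_e$. (5) For arcs $e_1\succ e_2$ of $T_0[G]$, add all arcs $x\to y$ with $x\in V_{e_1}$, $y\in V_{e_2}$. Then $T_G^\bigstar$ is the tournament formed by disjoint copies $T_{i*k}$ of $T_i$ for $i\in[s]$, $k\in[r_i]$, with all arcs $u\to v$ for $u\in V(T_{i_1*k_1})$, $v\in V(T_{i_2*k_2})$ whenever $i_1<i_2$, or $i_1=i_2$ and $k_1<k_2$. $T_{i*k}[G]$ denotes the copy of $T_0[G]$ in $T_{i*k}$. *)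

theory Defs
  imports Complex_Main "HOL-Library.FuncSet"
begin

type_synonym 'a digraph = "'a set \<times> ('a \<times> 'a) set"

definition hom_maps :: "'a digraph \<Rightarrow> 'b digraph \<Rightarrow> ('a \<Rightarrow> 'b) set" where
  "hom_maps F T = {\<phi> \<in> fst F \<rightarrow>\<^sub>E fst T. \<forall>(u, v) \<in> snd F. (\<phi> u, \<phi> v) \<in> snd T}"

definition hom_rooted :: "'a digraph \<Rightarrow> 'a \<Rightarrow> 'a \<Rightarrow> 'b digraph \<Rightarrow> 'b \<Rightarrow> 'b \<Rightarrow> nat" where
  "hom_rooted F z w T x y = card {\<phi> \<in> hom_maps F T. \<phi> z = x \<and> \<phi> w = y}"

definition t_rooted :: "'a digraph \<Rightarrow> 'a \<Rightarrow> 'a \<Rightarrow> 'b digraph \<Rightarrow> 'b \<Rightarrow> 'b \<Rightarrow> real" where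
  "t_rooted F z w T x y =
     real (hom_rooted F z w T x y) / real (card (fst T)) ^ (card (fst F) - 2)"

definition is_tournament :: "'a set \<Rightarrow> ('a \<times> 'a) set \<Rightarrow> bool" where
  "is_tournament V E \<longleftrightarrow> E \<subseteq> V \<times> V \<and> (\<forall>v. (v, v) \<notin> E) \<and>
     (\<forall>u\<in>V. \<forall>v\<in>V. u \<noteq> v \<longrightarrow> ((u, v) \<in> E) \<noteq> ((v, u) \<in> E))"

definition has_dicycle :: "'a set \<Rightarrow> ('a \<times> 'a) set \<Rightarrow> bool" where
  "has_dicycle S E \<longleftrightarrow> (\<exists>vs. 2 \<le> length vs \<and> distinct vs \<and> set vs \<subseteq> S \<and>
     (\<forall>j < length vs. (vs ! j, vs ! ((j + 1) mod length vs)) \<in> E))"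

definition is_F0 :: "nat \<Rightarrow> (nat \<times> nat) set \<Rightarrow> bool" where
  "is_F0 m E0 \<longleftrightarrow> is_tournament {1..m} E0
     \<and> (\<forall>v\<in>{1..m}. real (card {u. (v, u) \<in> E0}) \<le> 2 * real m / 3
                   \<and> real (card {u. (u, v) \<in> E0}) \<le> 2 * real m / 3)
     \<and> \<not> (\<exists>A1 A2. A1 \<subseteq> {1..m} \<and> A2 \<subseteq> {1..m} \<and> A1 \<inter> A2 = {}
             \<and> card A1 = nat \<lceil>sqrt (real m)\<rceil> \<and> card A2 = nat \<lceil>sqrt (real m)\<rceil>
             \<and> (\<forall>a1\<in>A1. \<forall>a2\<in>A2. (a1, a2) \<in> E0))
     \<and> (\<forall>S \<subseteq> {1..m}. real (card S) \<ge> 2 * real m / 13 - sqrt (real m)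
             \<longrightarrow> has_dicycle S (E0 \<inter> S \<times> S))"

definition valid_ks :: "nat \<Rightarrow> nat \<Rightarrow> (nat \<Rightarrow> nat) \<Rightarrow> bool" where
  "valid_ks s m k \<longleftrightarrow>
     (\<forall>i\<in>{1..s}. 2 * real m / 3 + 2 < real (k i) \<and> real (k i) < 5 * real m / 6)
     \<and> (\<forall>i. 1 \<le> i \<and> i < s \<longrightarrow> k (Suc i) + 1 < k i)"

datatype fb = BZ | BW | BV nat

definition Fbb :: "nat \<Rightarrow> (nat \<times> nat) set \<Rightarrow> nat \<Rightarrow> fb digraph" where
  "Fbb m E0 k =
    (insert BZ (insert BW (BV ` {1..m})),
     {(BV u, BV v) | u v. (u, v) \<in> E0}
     \<union> {(BZ, BV v) | v. 1 \<le> v \<and> v \<le> k} \<union> {(BV v, BW) | v. 1 \<le> v \<and> v \<le> k}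
     \<union> {(BV u, BZ) | u. k < u \<and> u \<le> m} \<union> {(BW, BV u) | u. k < u \<and> u \<le> m})"

datatype fd = FZ | FW | FL nat | FR nat

text \<open>Left copy: roots z^1 = z_i, w^1 = w_i. Right copy: z^2 = w_i, w^2 = z_i.\<close>
fun left_map :: "fb \<Rightarrow> fd" where
  "left_map BZ = FZ" | "left_map BW = FW" | "left_map (BV v) = FL v"

fun right_map :: "fb \<Rightarrow> fd" where
  "right_map BZ = FW" | "right_map BW = FZ" | "right_map (BV v) = FR v"

definition Fdag :: "nat \<Rightarrow> (nat \<times> nat) set \<Rightarrow> nat \<Rightarrow> fd digraph" where
  "Fdag m E0 k = (let B = Fbb m E0 k in
     (left_map ` fst B \<union> right_map ` fst B,
      map_prod left_map left_map ` snd B \<union> map_prod right_map right_map ` snd B))"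

definition is_graph :: "nat \<Rightarrow> nat set set \<Rightarrow> bool" where
  "is_graph n GE \<longleftrightarrow> (\<forall>e\<in>GE. e \<subseteq> {1..n} \<and> card e = 2)"

definition arcsG :: "nat \<Rightarrow> nat set set \<Rightarrow> (nat \<times> nat) set" where
  "arcsG n GE = {(a, b). 1 \<le> a \<and> a < b \<and> b \<le> n \<and> {a, b} \<in> GE}"

definition arc_succ :: "nat \<times> nat \<Rightarrow> nat \<times> nat \<Rightarrow> bool" where
  "arc_succ e1 e2 \<longleftrightarrow> fst e1 + snd e1 > fst e2 + snd e2
     \<or> (fst e1 + snd e1 = fst e2 + snd e2 \<and> fst e1 > fst e2)"

text \<open>Vertices of T_i: roots Rt a (a in [n]); for each arc e of T_0[G], the non-root
  vertices NL e v (left copy) and NR e v (right copy), v in [m].\<close>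
datatype tv = Rt nat | NL "nat \<times> nat" nat | NR "nat \<times> nat" nat

fun embed :: "nat \<times> nat \<Rightarrow> fd \<Rightarrow> tv" where
  "embed e FZ = Rt (fst e)" | "embed e FW = Rt (snd e)"
| "embed e (FL v) = NL e v" | "embed e (FR v) = NR e v"

definition nonroot :: "nat \<Rightarrow> nat \<times> nat \<Rightarrow> tv set" where
  "nonroot m e = NL e ` {1..m} \<union> NR e ` {1..m}"

definition Ti_V :: "nat \<Rightarrow> nat set set \<Rightarrow> nat \<Rightarrow> tv set" where
  "Ti_V n GE m = Rt ` {1..n} \<union> (\<Union>e\<in>arcsG n GE. nonroot m e)"

definition Ti_E :: "nat \<Rightarrow> nat set set \<Rightarrow> nat \<Rightarrow> (nat \<times> nat) set \<Rightarrow> nat \<Rightarrow> (tv \<times> tv) set" where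
  "Ti_E n GE m E0 k =
     {(Rt a, Rt b) | a b. 1 \<le> a \<and> a < b \<and> b \<le> n}
     \<union> (\<Union>e\<in>arcsG n GE. map_prod (embed e) (embed e) ` snd (Fdag m E0 k))
     \<union> (\<Union>e\<in>arcsG n GE. {(NL e u, NR e v) | u v. u \<in> {1..m} \<and> v \<in> {1..m}})
     \<union> (\<Union>e\<in>arcsG n GE. {(Rt x, y) | x y. x \<in> {1..n} \<and> x \<noteq> fst e \<and> x \<noteq> snd e
                                           \<and> y \<in> nonroot m e})
     \<union> {(u, v) | e1 e2 u v. e1 \<in> arcsG n GE \<and> e2 \<in> arcsG n GE \<and> arc_succ e1 e2
                           \<and> u \<in> nonroot m e1 \<and> v \<in> nonroot m e2}"

text \<open>T_G^star: vertex (i, j, v) is vertex v of the copy T_{i*j} of T_i.\<close>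
definition Tstar :: "nat \<Rightarrow> (nat \<Rightarrow> nat) \<Rightarrow> nat \<Rightarrow> nat set set \<Rightarrow> nat \<Rightarrow> (nat \<times> nat) set
    \<Rightarrow> (nat \<Rightarrow> nat) \<Rightarrow> (nat \<times> nat \<times> tv) digraph" where
  "Tstar s r n GE m E0 k =
    (let V = {(i, j, v). i \<in> {1..s} \<and> j \<in> {1..r i} \<and> v \<in> Ti_V n GE m} in
     (V,
      {((i, j, u), (i, j, v)) | i j u v. i \<in> {1..s} \<and> j \<in> {1..r i}
                                         \<and> (u, v) \<in> Ti_E n GE m E0 (k i)}
      \<union> {(p, q). p \<in> V \<and> q \<in> V \<and>
            (fst p < fst q \<or> (fst p = fst q \<and> fst (snd p) < fst (snd q)))}))"

end

theory Submission
  imports Defs "HOL-Library.Product_Lexorder"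
begin

text \<open>A homomorphism of \<open>F\<^sub>i\<^sup>\<dagger>\<^sup>\<bullet>\<^sup>\<bullet>\<close> into \<open>T\<^sub>G\<^sup>\<star>\<close> stays in one copy \<open>T\<^sub>i\<^sub>'\<^sub>*\<^sub>j\<close>:
  arcs between copies all point forward, and every vertex of \<open>F\<^sub>i\<^sup>\<dagger>\<^sup>\<bullet>\<^sup>\<bullet>\<close> lies on a
  closed walk through the root \<open>z\<close>. Inside \<open>T\<^sub>i\<^sub>'\<close>, each of the two copies of \<open>F\<^sub>0\<close> lands in a
  single gadget together with its two ends, and on one side of it: \<open>F\<^sub>0\<close> has all degrees at most
  \<open>2m/3\<close> and no complete bipartite pair of size \<open>\<lceil>\<surd>m\<rceil>\<close>, while the roots of \<open>T\<^sub>i\<^sub>'\<close>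
  form a transitive tournament and distinct gadgets are completely joined. The roots \<open>z, w\<close>, having
  large in- and out-neighbourhoods in these copies, are pinned to the two ends, and comparing the
  sizes of these neighbourhoods forces \<open>k\<^sub>i\<^sub>' = k\<^sub>i\<close>, i.e. \<open>i' = i\<close>. So every homomorphism
  rooted at an arc of \<open>T\<^sub>i\<^sub>*\<^sub>j[G]\<close> is the lift of a homomorphism of \<open>F\<^sub>i\<^sup>\<dagger>\<^sup>\<bullet>\<^sup>\<bullet>\<close> into a
  single gadget fixing the roots; their number does not depend on the arc, and exchanging the two
  copies of \<open>F\<^sub>i\<^sup>\<bullet>\<^sup>\<bullet>\<close> shows it is the same for the reversed pair.\<close>

lemma mem_map_prod_image_iff:
  "(a, b) \<in> map_prod f g ` S \<longleftrightarrow> (\<exists>a' b'. (a', b') \<in> S \<and> a = f a' \<and> b = g b')"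
  by force

lemma card_le_card_plus_two_if_image_subset:
  assumes "inj_on f B" "finite Q" "f ` B \<subseteq> N ` Q \<union> {a, b}"
  shows "card B \<le> card Q + 2"
proof -
  have "card B = card (f ` B)" using assms(1) by (simp add: card_image)
  also have "\<dots> \<le> card (N ` Q \<union> {a, b})" using assms(2,3) by (intro card_mono) auto
  also have "\<dots> \<le> card (N ` Q) + card {a, b}" by (rule card_Un_le)
  also have "\<dots> \<le> card Q + 2" using assms(2) by (intro add_mono card_image_le) (auto simp: card_insert_if)
  finally show ?thesis .
qed

lemma threshold_level:
  fixes h :: "'a \<Rightarrow> 'b::linorder"
  assumes "finite Z" "c \<le> card Z" "0 < c"
  shows "\<exists>t. c \<le> card {z\<in>Z. t \<le> h z} \<and> card {z\<in>Z. t < h z} < c"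
proof -
  define S where "S = {t \<in> h ` Z. c \<le> card {z\<in>Z. t \<le> h z}}"
  have "Z \<noteq> {}" using assms(2,3) by auto
  then have "{z\<in>Z. Min (h ` Z) \<le> h z} = Z" using assms(1) by auto
  then have "Min (h ` Z) \<in> S" using \<open>Z \<noteq> {}\<close> assms(1,2) by (simp add: S_def)
  moreover have "finite S" using assms(1) by (simp add: S_def)
  ultimately have t0: "Max S \<in> S" by (intro Max_in) auto
  have "card {z\<in>Z. Max S < h z} < c"
  proof (rule ccontr)
    define U where "U = {z\<in>Z. Max S < h z}"
    assume "\<not> card {z\<in>Z. Max S < h z} < c"
    then have "c \<le> card U" by (simp add: U_def)
    then have "U \<noteq> {}" using assms(3) by auto
    have fin_U: "finite (h ` U)" using assms(1) by (simp add: U_def)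
    have "U \<subseteq> {z\<in>Z. Min (h ` U) \<le> h z}" using fin_U by (auto simp: U_def)
    then have "card U \<le> card {z\<in>Z. Min (h ` U) \<le> h z}" using assms(1) by (intro card_mono) auto
    then have "c \<le> card {z\<in>Z. Min (h ` U) \<le> h z}" using \<open>c \<le> card U\<close> by linarith
    moreover have "Min (h ` U) \<in> h ` U" using fin_U \<open>U \<noteq> {}\<close> by (intro Min_in) auto
    ultimately have "Min (h ` U) \<in> S" "Max S < Min (h ` U)" by (auto simp: S_def U_def)
    then show False using Max_ge[OF \<open>finite S\<close>] leD by blast
  qed
  then show ?thesis using t0 by (auto simp: S_def)
qed

section \<open>The arc relations of \<open>F\<^sub>i\<^sup>\<dagger>\<^sup>\<bullet>\<^sup>\<bullet>\<close> and \<open>T\<^sub>i\<close>\<close>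

fun fdag_arc :: "nat \<Rightarrow> (nat \<times> nat) set \<Rightarrow> nat \<Rightarrow> fd \<Rightarrow> fd \<Rightarrow> bool" where
  "fdag_arc m E0 k FZ (FL v) = (1 \<le> v \<and> v \<le> k)"
| "fdag_arc m E0 k (FL v) FW = (1 \<le> v \<and> v \<le> k)"
| "fdag_arc m E0 k (FL u) FZ = (k < u \<and> u \<le> m)"
| "fdag_arc m E0 k FW (FL u) = (k < u \<and> u \<le> m)"
| "fdag_arc m E0 k FW (FR v) = (1 \<le> v \<and> v \<le> k)"
| "fdag_arc m E0 k (FR v) FZ = (1 \<le> v \<and> v \<le> k)"
| "fdag_arc m E0 k (FR u) FW = (k < u \<and> u \<le> m)"
| "fdag_arc m E0 k FZ (FR u) = (k < u \<and> u \<le> m)"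
| "fdag_arc m E0 k (FL u) (FL v) = ((u, v) \<in> E0)"
| "fdag_arc m E0 k (FR u) (FR v) = ((u, v) \<in> E0)"
| "fdag_arc m E0 k _ _ = False"

lemma left_map_eq_iff [simp]:
  "FZ = left_map b \<longleftrightarrow> b = BZ" "FW = left_map b \<longleftrightarrow> b = BW"
  "FL v = left_map b \<longleftrightarrow> b = BV v" "FR v \<noteq> left_map b"
  by (cases b; auto)+

lemma right_map_eq_iff [simp]:
  "FW = right_map b \<longleftrightarrow> b = BZ" "FZ = right_map b \<longleftrightarrow> b = BW"
  "FR v = right_map b \<longleftrightarrow> b = BV v" "FL v \<noteq> right_map b"
  by (cases b; auto)+

lemma Fdag_arc_iff: "(a, b) \<in> snd (Fdag m E0 k) \<longleftrightarrow> fdag_arc m E0 k a b"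
proof -
  have "(a, b) \<in> snd (Fdag m E0 k) \<longleftrightarrow>
     (\<exists>a' b'. (a', b') \<in> snd (Fbb m E0 k) \<and> a = left_map a' \<and> b = left_map b') \<or>
     (\<exists>a' b'. (a', b') \<in> snd (Fbb m E0 k) \<and> a = right_map a' \<and> b = right_map b')"
    by (simp add: Fdag_def Let_def mem_map_prod_image_iff)
  also have "\<dots> \<longleftrightarrow> fdag_arc m E0 k a b"
    by (cases a; cases b) (simp_all add: Fbb_def)
  finally show ?thesis .
qed

lemma Fdag_V: "fst (Fdag m E0 K) = {FZ, FW} \<union> FL ` {1..m} \<union> FR ` {1..m}"
  by (auto simp: Fdag_def Fbb_def Let_def image_image)

lemma Fdag_V_iff:
  "a \<in> fst (Fdag m E0 K) \<longleftrightarrow> a = FZ \<or> a = FW \<or> (\<exists>v\<in>{1..m}. a = FL v) \<or> (\<exists>v\<in>{1..m}. a = FR v)"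
  unfolding Fdag_V by auto

lemma finite_Fdag_V: "finite (fst (Fdag m E0 K))" unfolding Fdag_V by simp

lemma fdag_arc_in_Fdag_V: "fdag_arc m E0 K a b \<Longrightarrow> K \<le> m \<Longrightarrow> E0 \<subseteq> {1..m} \<times> {1..m} \<Longrightarrow>
   a \<in> fst (Fdag m E0 K) \<and> b \<in> fst (Fdag m E0 K)"
  unfolding Fdag_V_iff by (cases a; cases b) auto

fun Ti_arc :: "nat \<Rightarrow> nat set set \<Rightarrow> nat \<Rightarrow> (nat \<times> nat) set \<Rightarrow> nat \<Rightarrow> tv \<Rightarrow> tv \<Rightarrow> bool" where
  "Ti_arc n GE m E0 K (Rt a) (Rt b) = (1 \<le> a \<and> a < b \<and> b \<le> n)"
| "Ti_arc n GE m E0 K (Rt c) (NL e v) = (e \<in> arcsG n GE \<and> v \<in> {1..m} \<and> c \<in> {1..n} \<and>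
     (c = fst e \<longrightarrow> v \<le> K) \<and> (c = snd e \<longrightarrow> K < v))"
| "Ti_arc n GE m E0 K (NL e v) (Rt c) = (e \<in> arcsG n GE \<and> v \<in> {1..m} \<and>
     ((c = fst e \<and> K < v) \<or> (c = snd e \<and> v \<le> K)))"
| "Ti_arc n GE m E0 K (Rt c) (NR e v) = (e \<in> arcsG n GE \<and> v \<in> {1..m} \<and> c \<in> {1..n} \<and>
     (c = fst e \<longrightarrow> K < v) \<and> (c = snd e \<longrightarrow> v \<le> K))"
| "Ti_arc n GE m E0 K (NR e v) (Rt c) = (e \<in> arcsG n GE \<and> v \<in> {1..m} \<and>
     ((c = fst e \<and> v \<le> K) \<or> (c = snd e \<and> K < v)))"
| "Ti_arc n GE m E0 K (NL e u) (NL e' v) = (e \<in> arcsG n GE \<and> e' \<in> arcsG n GE \<and> u \<in> {1..m} \<and>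
     v \<in> {1..m} \<and> (if e = e' then (u, v) \<in> E0 else arc_succ e e'))"
| "Ti_arc n GE m E0 K (NR e u) (NR e' v) = (e \<in> arcsG n GE \<and> e' \<in> arcsG n GE \<and> u \<in> {1..m} \<and>
     v \<in> {1..m} \<and> (if e = e' then (u, v) \<in> E0 else arc_succ e e'))"
| "Ti_arc n GE m E0 K (NL e u) (NR e' v) = (e \<in> arcsG n GE \<and> e' \<in> arcsG n GE \<and> u \<in> {1..m} \<and>
     v \<in> {1..m} \<and> (e = e' \<or> arc_succ e e'))"
| "Ti_arc n GE m E0 K (NR e u) (NL e' v) = (e \<in> arcsG n GE \<and> e' \<in> arcsG n GE \<and> u \<in> {1..m} \<and>
     v \<in> {1..m} \<and> arc_succ e e')"

lemma embed_eq_iff: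
  "Rt c = embed e a \<longleftrightarrow> (a = FZ \<and> c = fst e) \<or> (a = FW \<and> c = snd e)"
  "NL e' v = embed e a \<longleftrightarrow> a = FL v \<and> e' = e" "NR e' v = embed e a \<longleftrightarrow> a = FR v \<and> e' = e"
  by (cases a; auto)+

lemma tv_mem_image_iff [simp]:
  "NL x y \<in> NL e ` S \<longleftrightarrow> x = e \<and> y \<in> S" "NR x y \<in> NR e ` S \<longleftrightarrow> x = e \<and> y \<in> S"
  "Rt c \<in> Rt ` A \<longleftrightarrow> c \<in> A"
  "NL x y \<notin> NR e ` S" "NR x y \<notin> NL e ` S" "Rt c \<notin> NL e ` S" "Rt c \<notin> NR e ` S"
  "NL x y \<notin> Rt ` A" "NR x y \<notin> Rt ` A"
  by auto

lemma Ti_E_iff: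
  assumes "E0 \<subseteq> {1..m} \<times> {1..m}" "K \<le> m"
  shows "(u, v) \<in> Ti_E n GE m E0 K \<longleftrightarrow> Ti_arc n GE m E0 K u v"
proof -
  note ex_disj_distrib [simp] conj_disj_distribL [simp] conj_disj_distribR [simp]
  have embedded_arc: "(u, v) \<in> map_prod (embed e) (embed e) ` snd (Fdag m E0 K) \<longleftrightarrow>
     (\<exists>a b. fdag_arc m E0 K a b \<and> u = embed e a \<and> v = embed e b)" for e u v
    by (simp add: Fdag_arc_iff mem_map_prod_image_iff)
  show ?thesis
    using assms
    by (cases u; cases v)
      (simp_all add: Ti_E_def embedded_arc embed_eq_iff nonroot_def, auto simp: arc_succ_def arcsG_def)
qed

abbreviation ends :: "nat \<times> nat \<Rightarrow> tv set" where
  "ends e \<equiv> {Rt (fst e), Rt (snd e)}"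

lemma arcsG_bounds: "e \<in> arcsG n GE \<Longrightarrow> 1 \<le> fst e \<and> fst e < snd e \<and> snd e \<le> n"
  by (auto simp: arcsG_def)

definition succ_key :: "nat \<times> nat \<Rightarrow> nat \<times> nat" where
  "succ_key e = (fst e + snd e, fst e)"

lemma arc_succ_iff_succ_key: "arc_succ e e' \<longleftrightarrow> succ_key e' < succ_key e"
  by (auto simp: arc_succ_def succ_key_def less_prod_def)

lemma succ_key_inj: "inj succ_key"
  by (rule injI) (auto simp: succ_key_def prod_eq_iff)

lemma arc_succ_irrefl [simp]: "\<not> arc_succ e e"
  by (simp add: arc_succ_iff_succ_key)

lemma arc_succ_asym: "arc_succ e e' \<Longrightarrow> \<not> arc_succ e' e"
  by (simp add: arc_succ_iff_succ_key)

lemma arc_succ_total: "e \<noteq> e' \<Longrightarrow> arc_succ e e' \<or> arc_succ e' e"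
  by (metis arc_succ_iff_succ_key inj_eq neq_iff succ_key_inj)

lemma Ti_V_iff [simp]:
  "Rt c \<in> Ti_V n GE m \<longleftrightarrow> c \<in> {1..n}"
  "NL e w \<in> Ti_V n GE m \<longleftrightarrow> e \<in> arcsG n GE \<and> w \<in> {1..m}"
  "NR e w \<in> Ti_V n GE m \<longleftrightarrow> e \<in> arcsG n GE \<and> w \<in> {1..m}"
  by (auto simp: Ti_V_def nonroot_def)

lemma nonroot_iff [simp]:
  "Rt c \<notin> nonroot m e"
  "NL e' w \<in> nonroot m e \<longleftrightarrow> e' = e \<and> w \<in> {1..m}"
  "NR e' w \<in> nonroot m e \<longleftrightarrow> e' = e \<and> w \<in> {1..m}"
  by (auto simp: nonroot_def)

lemma Ti_arc_in_Ti_V: "Ti_arc n GE m E0 K u v \<Longrightarrow> u \<in> Ti_V n GE m \<and> v \<in> Ti_V n GE m"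
  by (cases u; cases v) (auto dest: arcsG_bounds)

lemma Ti_arc_between_gadgets:
  "x \<in> nonroot m e \<Longrightarrow> y \<in> nonroot m e' \<Longrightarrow> e \<in> arcsG n GE \<Longrightarrow> e' \<in> arcsG n GE \<Longrightarrow>
   arc_succ e e' \<Longrightarrow> Ti_arc n GE m E0 K x y"
  by (cases x; cases y) auto

lemma Ti_arc_root_to_gadget:
  "c \<in> {1..n} \<Longrightarrow> Rt c \<notin> ends e \<Longrightarrow> y \<in> nonroot m e \<Longrightarrow> e \<in> arcsG n GE \<Longrightarrow>
   Ti_arc n GE m E0 K (Rt c) y"
  by (cases y) auto

lemma Ti_arc_outside_gadget:
  assumes "z \<in> Ti_V n GE m" "z \<notin> nonroot m e \<union> ends e" "e \<in> arcsG n GE"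
  shows "(\<forall>y\<in>nonroot m e. Ti_arc n GE m E0 K z y) \<or> (\<forall>y\<in>nonroot m e. Ti_arc n GE m E0 K y z)"
proof (cases z)
  case (Rt c)
  then show ?thesis using assms Ti_arc_root_to_gadget by auto
next
  case (NL e' w)
  then have "arc_succ e' e \<or> arc_succ e e'" using assms arc_succ_total by auto
  then show ?thesis using assms NL Ti_arc_between_gadgets[of _ m] by (metis Ti_V_iff(2) nonroot_iff(2))
next
  case (NR e' w)
  then have "arc_succ e' e \<or> arc_succ e e'" using assms arc_succ_total by auto
  then show ?thesis using assms NR Ti_arc_between_gadgets[of _ m] by (metis Ti_V_iff(3) nonroot_iff(3))
qed

text \<open>The last case is that of a vertex \<open>z = N u\<close> of the side itself.\<close>
lemma Ti_arc_side_trichotomy: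
  assumes "N = NL e \<or> N = NR e" "z \<notin> ends e"
  shows "(\<forall>w. \<not> Ti_arc n GE m E0 K z (N w)) \<or> (\<forall>w. \<not> Ti_arc n GE m E0 K (N w) z) \<or>
    (\<exists>u. \<forall>w. (Ti_arc n GE m E0 K z (N w) \<longrightarrow> (u, w) \<in> E0) \<and>
               (Ti_arc n GE m E0 K (N w) z \<longrightarrow> (w, u) \<in> E0))"
proof -
  let ?arc = "Ti_arc n GE m E0 K"
  have "(\<forall>w. \<not> ?arc z (N w)) \<or> (\<forall>w. \<not> ?arc (N w) z) \<or> (\<exists>u. z = N u)"
  proof (cases z)
    case (NL e' u)
    show ?thesis
    proof (cases "e' = e")
      case False
      then show ?thesis using assms(1) NL arc_succ_total[OF False] by (auto dest: arc_succ_asym)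
    qed (use assms(1) NL in auto)
  next
    case (NR e' u)
    show ?thesis
    proof (cases "e' = e")
      case False
      then show ?thesis using assms(1) NR arc_succ_total[OF False] by (auto dest: arc_succ_asym)
    qed (use assms(1) NR in auto)
  qed (use assms in auto)
  moreover have "?arc (N u) (N w) \<Longrightarrow> (u, w) \<in> E0" for u w
    using assms(1) by auto
  ultimately show ?thesis by blast
qed

lemma Ti_arc_end_side:
  assumes "e \<in> arcsG n GE" "N = NL e \<or> N = NR e" "x \<in> ends e"
  shows "\<exists>S \<in> {{1..K}, {Suc K..m}}. \<forall>w\<in>{1..m}.
           (Ti_arc n GE m E0 K x (N w) \<longleftrightarrow> w \<in> S) \<and> (Ti_arc n GE m E0 K (N w) x \<longleftrightarrow> w \<notin> S)"
  using assms arcsG_bounds[OF assms(1)] by auto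

section \<open>The tournament \<open>F\<^sub>0\<close>\<close>

locale F0_tournament =
  fixes m :: nat and E0 :: "(nat \<times> nat) set"
  assumes F0: "is_F0 m E0" and m_large: "400 \<le> m"
begin

definition sqrt_ceil :: nat where "sqrt_ceil = nat \<lceil>sqrt (real m)\<rceil>"

lemma sqrt_ceil_bounds: "0 < sqrt_ceil" "12 * sqrt_ceil + 12 \<le> m"
proof -
  have m_sq: "real m = sqrt (real m) * sqrt (real m)" by simp
  have "20 \<le> sqrt (real m)" using m_large real_sqrt_le_mono[of 400 "real m"] by simp
  then have "12 * sqrt (real m) + 24 \<le> real m"
    using m_sq mult_right_mono[of 20 "sqrt (real m)" "sqrt (real m)"] by linarith
  moreover have "real sqrt_ceil = of_int \<lceil>sqrt (real m)\<rceil>"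
    unfolding sqrt_ceil_def by (simp add: ceiling_le_zero)
  then have "sqrt (real m) \<le> real sqrt_ceil" "real sqrt_ceil \<le> sqrt (real m) + 1"
    by linarith+
  ultimately show "0 < sqrt_ceil" "12 * sqrt_ceil + 12 \<le> m"
    using \<open>20 \<le> sqrt (real m)\<close> by linarith+
qed

lemma tournament: "is_tournament {1..m} E0"
  using F0 by (simp add: is_F0_def)

lemma E0_subset: "E0 \<subseteq> {1..m} \<times> {1..m}"
  using tournament by (auto simp: is_tournament_def)

lemma E0_irrefl: "(u, u) \<notin> E0"
  using tournament by (auto simp: is_tournament_def)

lemma E0_asym:
  assumes "(u, v) \<in> E0" shows "(v, u) \<notin> E0"
proof -
  have "u \<in> {1..m}" "v \<in> {1..m}" "u \<noteq> v" using assms E0_subset E0_irrefl by blast+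
  then show ?thesis using assms tournament unfolding is_tournament_def by blast
qed

lemma E0_total: "u \<in> {1..m} \<Longrightarrow> v \<in> {1..m} \<Longrightarrow> u \<noteq> v \<Longrightarrow> (u, v) \<in> E0 \<or> (v, u) \<in> E0"
  using tournament unfolding is_tournament_def by blast

lemma finite_neighbourhoods: "finite {w. (u, w) \<in> E0}" "finite {w. (w, u) \<in> E0}"
  by (rule finite_subset[of _ "{1..m}"], use E0_subset in auto)+

lemma card_neighbourhoods:
  "real (card {w. (u, w) \<in> E0}) \<le> 2 * real m / 3" "real (card {w. (w, u) \<in> E0}) \<le> 2 * real m / 3"
proof -
  have "\<forall>v\<in>{1..m}. real (card {w. (v, w) \<in> E0}) \<le> 2 * real m / 3
                   \<and> real (card {w. (w, v) \<in> E0}) \<le> 2 * real m / 3"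
    using F0 unfolding is_F0_def by blast
  moreover have "u \<notin> {1..m} \<Longrightarrow> {w. (u, w) \<in> E0} = {} \<and> {w. (w, u) \<in> E0} = {}"
    using E0_subset by auto
  ultimately show "real (card {w. (u, w) \<in> E0}) \<le> 2 * real m / 3"
    "real (card {w. (w, u) \<in> E0}) \<le> 2 * real m / 3"
    by (cases "u \<in> {1..m}"; simp)+
qed

lemma out_degree_le:
  assumes "\<forall>w\<in>Y. (u, w) \<in> E0" shows "real (card Y) \<le> 2 * real m / 3"
proof -
  have "card Y \<le> card {w. (u, w) \<in> E0}"
    using assms by (intro card_mono finite_neighbourhoods) auto
  then show ?thesis using card_neighbourhoods(1)[of u] by linarith
qed

lemma in_degree_le:
  assumes "\<forall>w\<in>Y. (w, u) \<in> E0" shows "real (card Y) \<le> 2 * real m / 3"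
proof -
  have "card Y \<le> card {w. (w, u) \<in> E0}"
    using assms by (intro card_mono finite_neighbourhoods) auto
  then show ?thesis using card_neighbourhoods(2)[of u] by linarith
qed

lemma complete_pair_small_side:
  assumes "X \<subseteq> {1..m}" "Y \<subseteq> {1..m}" "X \<inter> Y = {}" "\<forall>x\<in>X. \<forall>y\<in>Y. (x, y) \<in> E0"
  shows "card X < sqrt_ceil \<or> card Y < sqrt_ceil"
proof (rule ccontr)
  assume "\<not> ?thesis"
  then obtain A1 A2 where A: "A1 \<subseteq> X" "card A1 = sqrt_ceil" "A2 \<subseteq> Y" "card A2 = sqrt_ceil"
    by (meson not_less obtain_subset_with_card_n)
  have "\<exists>A1 A2. A1 \<subseteq> {1..m} \<and> A2 \<subseteq> {1..m} \<and> A1 \<inter> A2 = {}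
             \<and> card A1 = nat \<lceil>sqrt (real m)\<rceil> \<and> card A2 = nat \<lceil>sqrt (real m)\<rceil>
             \<and> (\<forall>a1\<in>A1. \<forall>a2\<in>A2. (a1, a2) \<in> E0)"
    by (rule exI[of _ A1], rule exI[of _ A2]) (use A assms in \<open>force simp: sqrt_ceil_def\<close>)
  then show False using F0 unfolding is_F0_def by blast
qed

text \<open>Because all degrees are at most \<open>2m/3\<close>, a complete pair covering almost all of \<open>[m]\<close>
  cannot have a small nonempty side.\<close>
lemma complete_pair_empty_side:
  assumes "X \<subseteq> {1..m}" "Y \<subseteq> {1..m}" "X \<inter> Y = {}" "\<forall>x\<in>X. \<forall>y\<in>Y. (x, y) \<in> E0"
    and "m \<le> card X + card Y + 2"
  shows "X = {} \<or> Y = {}"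
proof (rule ccontr)
  assume nonempty: "\<not> ?thesis"
  from complete_pair_small_side[OF assms(1-4)] show False
  proof
    assume "card X < sqrt_ceil"
    moreover obtain x where "x \<in> X" using nonempty by auto
    then have "real (card Y) \<le> 2 * real m / 3" using assms(4) out_degree_le by blast
    ultimately show False using assms(5) sqrt_ceil_bounds by linarith
  next
    assume "card Y < sqrt_ceil"
    moreover obtain y where "y \<in> Y" using nonempty by auto
    then have "real (card X) \<le> 2 * real m / 3" using assms(4) in_degree_le by blast
    ultimately show False using assms(5) sqrt_ceil_bounds by linarith
  qed
qed

lemma large_level_set:
  fixes h :: "nat \<Rightarrow> 'b::linorder"
  assumes Z: "Z \<subseteq> {1..m}"
    and ordered: "(\<forall>x\<in>Z. \<forall>y\<in>Z. h x < h y \<longrightarrow> (x, y) \<in> E0) \<or> (\<forall>x\<in>Z. \<forall>y\<in>Z. h x < h y \<longrightarrow> (y, x) \<in> E0)"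
  shows "\<exists>t. card Z < card {z\<in>Z. h z = t} + 2 * sqrt_ceil"
proof (cases "sqrt_ceil \<le> card Z")
  case True
  have fin: "finite Z" using Z finite_subset by blast
  obtain t where t: "sqrt_ceil \<le> card {z\<in>Z. t \<le> h z}" "card {z\<in>Z. t < h z} < sqrt_ceil"
    using threshold_level[OF fin True sqrt_ceil_bounds(1)] by blast
  define X where "X = {z\<in>Z. h z < t}"
  define Y where "Y = {z\<in>Z. t \<le> h z}"
  have XY: "X \<subseteq> {1..m}" "Y \<subseteq> {1..m}" "X \<inter> Y = {}" "Y \<inter> X = {}"
    using Z by (auto simp: X_def Y_def)
  have "card X < sqrt_ceil \<or> card Y < sqrt_ceil"
    using ordered
  proof
    assume "\<forall>x\<in>Z. \<forall>y\<in>Z. h x < h y \<longrightarrow> (x, y) \<in> E0"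
    then have "\<forall>x\<in>X. \<forall>y\<in>Y. (x, y) \<in> E0" by (auto simp: X_def Y_def)
    then show ?thesis using complete_pair_small_side[OF XY(1-3)] by blast
  next
    assume "\<forall>x\<in>Z. \<forall>y\<in>Z. h x < h y \<longrightarrow> (y, x) \<in> E0"
    then have "\<forall>y\<in>Y. \<forall>x\<in>X. (y, x) \<in> E0" by (auto simp: X_def Y_def)
    then show ?thesis using complete_pair_small_side[OF XY(2,1,4)] by blast
  qed
  then have "card X < sqrt_ceil" using t(1) by (simp add: Y_def)
  have "card Z = card (X \<union> {z\<in>Z. t < h z} \<union> {z\<in>Z. h z = t})"
    by (rule arg_cong[of _ _ card]) (auto simp: X_def)
  also have "\<dots> \<le> card (X \<union> {z\<in>Z. t < h z}) + card {z\<in>Z. h z = t}"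
    by (rule card_Un_le)
  also have "\<dots> \<le> card X + card {z\<in>Z. t < h z} + card {z\<in>Z. h z = t}"
    using add_right_mono[OF card_Un_le[of X "{z\<in>Z. t < h z}"]] by simp
  finally show ?thesis using \<open>card X < sqrt_ceil\<close> t(2) by (intro exI[of _ t]) linarith
next
  case False
  then show ?thesis by auto
qed

end

section \<open>Homomorphisms of \<open>F\<^sub>0\<close> and \<open>F\<^sub>i\<^sup>\<dagger>\<^sup>\<bullet>\<^sup>\<bullet>\<close> into \<open>T\<^sub>i\<close>\<close>

context F0_tournament
begin

lemma Ti_arc_irrefl: "\<not> Ti_arc n GE m E0 K u u"
  by (cases u) (auto simp: E0_irrefl)

lemma Ti_arc_asym: "Ti_arc n GE m E0 K u v \<Longrightarrow> \<not> Ti_arc n GE m E0 K v u"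
  by (cases u; cases v) (auto simp: E0_asym dest: arc_succ_asym arcsG_bounds split: if_splits)

end

fun root_index :: "tv \<Rightarrow> nat" where
  "root_index (Rt c) = c" | "root_index _ = 0"

fun gadget_of :: "tv \<Rightarrow> nat \<times> nat" where
  "gadget_of (NL e _) = e" | "gadget_of (NR e _) = e" | "gadget_of (Rt _) = (0, 0)"

lemma in_nonroot_gadget_of:
  "x \<in> Ti_V n GE m \<Longrightarrow> x \<notin> range Rt \<Longrightarrow> x \<in> nonroot m (gadget_of x) \<and> gadget_of x \<in> arcsG n GE"
  by (cases x) auto

locale F0_hom_into_Ti = F0_tournament +
  fixes n :: nat and GE :: "nat set set" and K :: nat and f :: "nat \<Rightarrow> tv"
  assumes hom: "(u, v) \<in> E0 \<Longrightarrow> Ti_arc n GE m E0 K (f u) (f v)"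
begin

lemma hom_reflects:
  assumes "u \<in> {1..m}" "v \<in> {1..m}" "Ti_arc n GE m E0 K (f u) (f v)"
  shows "(u, v) \<in> E0"
proof -
  have "u \<noteq> v" using assms(3) Ti_arc_irrefl by metis
  then show ?thesis using E0_total[OF assms(1,2)] hom Ti_arc_asym assms(3) by blast
qed

lemma hom_inj: "inj_on f {1..m}"
proof (rule inj_onI)
  fix u v assume "u \<in> {1..m}" "v \<in> {1..m}" "f u = f v"
  then show "u = v" using E0_total hom Ti_arc_irrefl by metis
qed

lemma hom_in_Ti_V: "v \<in> {1..m} \<Longrightarrow> f v \<in> Ti_V n GE m"
proof -
  assume v: "v \<in> {1..m}"
  define w where "w = (if v = 1 then 2 else 1 :: nat)"
  have "w \<in> {1..m}" "w \<noteq> v" using m_large by (auto simp: w_def)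
  then show ?thesis using E0_total[OF v] hom Ti_arc_in_Ti_V by blast
qed

text \<open>The roots of \<open>T\<^sub>i\<close> form a transitive tournament.\<close>
lemma card_root_images: "card {v\<in>{1..m}. f v \<in> range Rt} \<le> 2 * sqrt_ceil"
proof -
  define R where "R = {v\<in>{1..m}. f v \<in> range Rt}"
  have root: "f v = Rt (root_index (f v)) \<and> root_index (f v) \<in> {1..n}" if "v \<in> R" for v
    using that hom_in_Ti_V[of v] by (auto simp: R_def)
  have ordered: "\<forall>x\<in>R. \<forall>y\<in>R. root_index (f x) < root_index (f y) \<longrightarrow> (x, y) \<in> E0"
  proof (intro ballI impI)
    fix x y assume "x \<in> R" "y \<in> R" "root_index (f x) < root_index (f y)"
    then have "Ti_arc n GE m E0 K (f x) (f y)" using root[OF \<open>x \<in> R\<close>] root[OF \<open>y \<in> R\<close>]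
      by (metis Ti_arc.simps(1) atLeastAtMost_iff)
    moreover have "x \<in> {1..m}" "y \<in> {1..m}" using \<open>x \<in> R\<close> \<open>y \<in> R\<close> by (simp_all add: R_def)
    ultimately show "(x, y) \<in> E0" using hom_reflects by blast
  qed
  have "R \<subseteq> {1..m}" by (auto simp: R_def)
  then have "\<exists>t. card R < card {z\<in>R. root_index (f z) = t} + 2 * sqrt_ceil"
    using ordered by (intro large_level_set) blast+
  then obtain t where t: "card R < card {z\<in>R. root_index (f z) = t} + 2 * sqrt_ceil" ..
  have "inj_on f {z\<in>R. root_index (f z) = t}" using hom_inj by (rule inj_on_subset) (auto simp: R_def)
  moreover have "f ` {z\<in>R. root_index (f z) = t} \<subseteq> {Rt t}" using root by auto
  ultimately have "card {z\<in>R. root_index (f z) = t} \<le> card {Rt t}"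
    by (rule card_inj_on_le) simp
  then show ?thesis using t unfolding R_def by simp
qed

text \<open>Vertices of different gadgets are joined according to \<open>\<succ>\<close>, so all but
  \<open>4\<lceil>\<surd>m\<rceil>\<close> vertices of \<open>F\<^sub>0\<close> lie on one level of the gadget of their image.\<close>
lemma dominant_gadget:
  obtains e W where "e \<in> arcsG n GE" "W \<subseteq> {1..m}" "2 * real m / 3 < real (card W)"
    "\<forall>w\<in>W. f w \<in> nonroot m e"
proof -
  define Z where "Z = {v\<in>{1..m}. f v \<notin> range Rt}"
  have gadget: "f z \<in> nonroot m (gadget_of (f z)) \<and> gadget_of (f z) \<in> arcsG n GE" if "z \<in> Z" for z
    using that hom_in_Ti_V[of z] in_nonroot_gadget_of[of "f z"] by (auto simp: Z_def)
  let ?key = "\<lambda>z. succ_key (gadget_of (f z))"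
  have ordered: "\<forall>x\<in>Z. \<forall>y\<in>Z. ?key x < ?key y \<longrightarrow> (y, x) \<in> E0"
  proof (intro ballI impI)
    fix x y assume "x \<in> Z" "y \<in> Z" "?key x < ?key y"
    then have "Ti_arc n GE m E0 K (f y) (f x)"
      using gadget Ti_arc_between_gadgets by (meson arc_succ_iff_succ_key)
    moreover have "x \<in> {1..m}" "y \<in> {1..m}" using \<open>x \<in> Z\<close> \<open>y \<in> Z\<close> by (simp_all add: Z_def)
    ultimately show "(y, x) \<in> E0" using hom_reflects by blast
  qed
  have "Z \<subseteq> {1..m}" by (auto simp: Z_def)
  then have "\<exists>t. card Z < card {z\<in>Z. ?key z = t} + 2 * sqrt_ceil"
    using ordered by (intro large_level_set) blast+
  then obtain t where t: "card Z < card {z\<in>Z. ?key z = t} + 2 * sqrt_ceil" ..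
  define W where "W = {z\<in>Z. ?key z = t}"
  have "{1..m} = Z \<union> {v\<in>{1..m}. f v \<in> range Rt}" by (auto simp: Z_def)
  then have "m \<le> card Z + card {v\<in>{1..m}. f v \<in> range Rt}"
    by (metis card_Un_le card_atLeastAtMost diff_Suc_1)
  then have card_W: "m < card W + 4 * sqrt_ceil" using t card_root_images by (simp add: W_def)
  then obtain w0 where "w0 \<in> W" using sqrt_ceil_bounds by fastforce
  show thesis
  proof
    show "gadget_of (f w0) \<in> arcsG n GE" using gadget \<open>w0 \<in> W\<close> by (simp add: W_def)
    show "W \<subseteq> {1..m}" by (auto simp: W_def Z_def)
    show "2 * real m / 3 < real (card W)" using card_W sqrt_ceil_bounds by linarith
    show "\<forall>w\<in>W. f w \<in> nonroot m (gadget_of (f w0))"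
    proof
      fix w assume "w \<in> W"
      then have "gadget_of (f w) = gadget_of (f w0)"
        using \<open>w0 \<in> W\<close> succ_key_inj by (auto simp: W_def inj_eq)
      then show "f w \<in> nonroot m (gadget_of (f w0))" using gadget \<open>w \<in> W\<close> by (metis W_def mem_Collect_eq)
    qed
  qed
qed

lemma lands_in_gadget: "\<exists>e\<in>arcsG n GE. \<forall>v\<in>{1..m}. f v \<in> nonroot m e \<union> ends e"
proof -
  obtain e W where e: "e \<in> arcsG n GE" and W: "W \<subseteq> {1..m}" "2 * real m / 3 < real (card W)"
    "\<forall>w\<in>W. f w \<in> nonroot m e"
    by (rule dominant_gadget)
  have "f v \<in> nonroot m e \<union> ends e" if v: "v \<in> {1..m}" for v
  proof (rule ccontr)
    assume "f v \<notin> nonroot m e \<union> ends e"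
    from Ti_arc_outside_gadget[OF hom_in_Ti_V[OF v] this e]
    have "(\<forall>w\<in>W. Ti_arc n GE m E0 K (f v) (f w)) \<or> (\<forall>w\<in>W. Ti_arc n GE m E0 K (f w) (f v))"
      using W(3) by blast
    then have "(\<forall>w\<in>W. (v, w) \<in> E0) \<or> (\<forall>w\<in>W. (w, v) \<in> E0)"
      using hom_reflects v W(1) by blast
    then show False using out_degree_le[of W v] in_degree_le[of W v] W(2) by linarith
  qed
  then show ?thesis using e by blast
qed

lemma one_side:
  assumes e: "e \<in> arcsG n GE" and into: "\<forall>v\<in>{1..m}. f v \<in> nonroot m e \<union> ends e"
  shows "\<exists>N\<in>{NL e, NR e}. \<forall>v\<in>{1..m}. f v \<in> N ` {1..m} \<union> ends e"
proof -
  define PL where "PL = {v\<in>{1..m}. f v \<in> NL e ` {1..m}}"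
  define PR where "PR = {v\<in>{1..m}. f v \<in> NR e ` {1..m}}"
  define PE where "PE = {v\<in>{1..m}. f v \<in> ends e}"
  have "inj_on f PE" using hom_inj by (rule inj_on_subset) (auto simp: PE_def)
  then have "card PE \<le> card (ends e)" by (rule card_inj_on_le) (auto simp: PE_def)
  also have "\<dots> \<le> 2" by (simp add: card_insert_le_m1)
  finally have "card PE \<le> 2" .
  have "{1..m} = PL \<union> PR \<union> PE" using into by (auto simp: PL_def PR_def PE_def nonroot_def)
  then have "m = card (PL \<union> PR \<union> PE)" by (metis card_atLeastAtMost diff_Suc_1)
  then have "m \<le> card PL + card PR + 2"
    using card_Un_le[of "PL \<union> PR" PE] card_Un_le[of PL PR] \<open>card PE \<le> 2\<close> by linarith
  moreover have "\<forall>x\<in>PL. \<forall>y\<in>PR. (x, y) \<in> E0"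
    using hom_reflects e by (auto simp: PL_def PR_def)
  moreover have "PL \<subseteq> {1..m}" "PR \<subseteq> {1..m}" "PL \<inter> PR = {}" by (auto simp: PL_def PR_def)
  ultimately have "PL = {} \<or> PR = {}" by (intro complete_pair_empty_side)
  then show ?thesis using into by (auto simp: PL_def PR_def nonroot_def)
qed

text \<open>Unless \<open>z\<close> is an end, it sees the side carrying the copy of \<open>F\<^sub>0\<close> in one direction only
  or like a vertex of \<open>F\<^sub>0\<close>, whose degrees are at most \<open>2m/3\<close>.\<close>
lemma pinned_at_ends:
  assumes e: "e \<in> arcsG n GE" and into: "\<forall>v\<in>{1..m}. f v \<in> nonroot m e \<union> ends e"
    and Bo: "Bo \<subseteq> {1..m}" "3 \<le> card Bo" and Bi: "Bi \<subseteq> {1..m}" "3 \<le> card Bi"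
    and large: "2 * real m / 3 + 2 < real (card Bo) \<or> 2 * real m / 3 + 2 < real (card Bi)"
    and out: "\<forall>v\<in>Bo. Ti_arc n GE m E0 K z (f v)" and inc: "\<forall>v\<in>Bi. Ti_arc n GE m E0 K (f v) z"
  shows "z \<in> ends e"
proof (rule ccontr)
  assume z: "z \<notin> ends e"
  obtain N where N: "N = NL e \<or> N = NR e" and side: "\<forall>v\<in>{1..m}. f v \<in> N ` {1..m} \<union> ends e"
    using one_side[OF e into] by blast
  have card_bound: "card B \<le> card Q + 2"
    if "B \<subseteq> {1..m}" "finite Q" "\<forall>v\<in>B. \<forall>w. f v = N w \<longrightarrow> w \<in> Q" for B Q
  proof (rule card_le_card_plus_two_if_image_subset[OF _ \<open>finite Q\<close>])
    show "inj_on f B" using hom_inj \<open>B \<subseteq> {1..m}\<close> by (rule inj_on_subset)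
    show "f ` B \<subseteq> N ` Q \<union> ends e" using that side by blast
  qed
  from Ti_arc_side_trichotomy[OF N z, of n GE m E0 K] show False
  proof (elim disjE exE)
    assume "\<forall>w. \<not> Ti_arc n GE m E0 K z (N w)"
    then have "card Bo \<le> card ({} :: nat set) + 2" using out Bo(1) by (intro card_bound) auto
    then show False using Bo(2) by simp
  next
    assume "\<forall>w. \<not> Ti_arc n GE m E0 K (N w) z"
    then have "card Bi \<le> card ({} :: nat set) + 2" using inc Bi(1) by (intro card_bound) auto
    then show False using Bi(2) by simp
  next
    fix u assume u: "\<forall>w. (Ti_arc n GE m E0 K z (N w) \<longrightarrow> (u, w) \<in> E0) \<and> (Ti_arc n GE m E0 K (N w) z \<longrightarrow> (w, u) \<in> E0)"
    have "card Bo \<le> card {w. (u, w) \<in> E0} + 2"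
      using out u Bo(1) finite_neighbourhoods(1) by (intro card_bound) auto
    moreover have "card Bi \<le> card {w. (w, u) \<in> E0} + 2"
      using inc u Bi(1) finite_neighbourhoods(2) by (intro card_bound) auto
    ultimately show False using large card_neighbourhoods[of u] by linarith
  qed
qed

end

context F0_tournament
begin

lemma Fdag_hom_on_copies_of_F0:
  assumes "\<And>a b. fdag_arc m E0 kF a b \<Longrightarrow> Ti_arc n GE m E0 K (g a) (g b)"
  shows "F0_hom_into_Ti m E0 n GE K (\<lambda>v. g (FL v))" "F0_hom_into_Ti m E0 n GE K (\<lambda>v. g (FR v))"
  using assms by (unfold_locales; simp)+

lemma Fdag_hom_into_gadget:
  assumes kF: "2 * real m / 3 + 2 < real kF" "real kF < 5 * real m / 6"
    and hom: "\<And>a b. fdag_arc m E0 kF a b \<Longrightarrow> Ti_arc n GE m E0 K (g a) (g b)"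
  shows "\<exists>e\<in>arcsG n GE. ((g FZ = Rt (fst e) \<and> g FW = Rt (snd e)) \<or> (g FZ = Rt (snd e) \<and> g FW = Rt (fst e)))
     \<and> (\<forall>v\<in>{1..m}. g (FL v) \<in> nonroot m e \<and> g (FR v) \<in> nonroot m e)"
proof -
  let ?arc = "Ti_arc n GE m E0 K"
  interpret L: F0_hom_into_Ti m E0 n GE K "\<lambda>v. g (FL v)" using Fdag_hom_on_copies_of_F0(1)[OF hom] .
  interpret R: F0_hom_into_Ti m E0 n GE K "\<lambda>v. g (FR v)" using Fdag_hom_on_copies_of_F0(2)[OF hom] .
  obtain e where e: "e \<in> arcsG n GE" and L_into: "\<forall>v\<in>{1..m}. g (FL v) \<in> nonroot m e \<union> ends e"
    using L.lands_in_gadget by blast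
  obtain e' where e': "e' \<in> arcsG n GE" and R_into: "\<forall>v\<in>{1..m}. g (FR v) \<in> nonroot m e' \<union> ends e'"
    using R.lands_in_gadget by blast
  define B1 where "B1 = {1..kF}"
  define B2 where "B2 = {Suc kF..m}"
  have B: "B1 \<subseteq> {1..m}" "B2 \<subseteq> {1..m}" "3 \<le> card B1" "3 \<le> card B2"
    "2 * real m / 3 + 2 < real (card B1)" "B1 \<union> B2 = {1..m}"
    using kF m_large by (auto simp: B1_def B2_def)
  have arcs: "\<forall>v\<in>B1. ?arc (g FZ) (g (FL v))" "\<forall>v\<in>B1. ?arc (g (FL v)) (g FW)"
    "\<forall>v\<in>B2. ?arc (g (FL v)) (g FZ)" "\<forall>v\<in>B2. ?arc (g FW) (g (FL v))"
    "\<forall>v\<in>B1. ?arc (g FW) (g (FR v))" "\<forall>v\<in>B1. ?arc (g (FR v)) (g FZ)"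
    "\<forall>v\<in>B2. ?arc (g (FR v)) (g FW)" "\<forall>v\<in>B2. ?arc (g FZ) (g (FR v))"
    using hom by (auto simp: B1_def B2_def)
  have "g FZ \<in> ends e" "g FW \<in> ends e" "g FZ \<in> ends e'" "g FW \<in> ends e'"
    using L.pinned_at_ends[OF e L_into B(1,3,2,4)] L.pinned_at_ends[OF e L_into B(2,4,1,3)]
      R.pinned_at_ends[OF e' R_into B(2,4,1,3)] R.pinned_at_ends[OF e' R_into B(1,3,2,4)]
      B(5) arcs by auto
  moreover have "1 \<in> B1" using kF by (simp add: B1_def)
  then have "g FZ \<noteq> g FW" using arcs(1,2) Ti_arc_asym by metis
  ultimately have ends: "(g FZ = Rt (fst e) \<and> g FW = Rt (snd e)) \<or> (g FZ = Rt (snd e) \<and> g FW = Rt (fst e))"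
    and "e' = e"
    using arcsG_bounds[OF e] arcsG_bounds[OF e'] by (auto simp: prod_eq_iff)
  have "g (FL v) \<notin> {g FZ, g FW} \<and> g (FR v) \<notin> {g FZ, g FW}" if "v \<in> {1..m}" for v
  proof -
    have "v \<in> B1 \<or> v \<in> B2" using that B(6) by blast
    then show ?thesis using arcs Ti_arc_irrefl[of n GE K] by (elim disjE) (metis insert_iff singletonD)+
  qed
  then show ?thesis using e ends L_into R_into \<open>e' = e\<close> by auto
qed

text \<open>An end of a gadget sees each side of it as a segment of length \<open>K\<close> or \<open>m - K\<close>, while in
  \<open>F\<^sup>\<dagger>\<^sup>\<bullet>\<^sup>\<bullet>\<close> the root \<open>z\<close> sees the left copy as the segment \<open>{1..k\<^sub>F}\<close>.\<close>
lemma Fdag_hom_parameter: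
  assumes K: "2 * real m / 3 + 2 < real K" "real K < 5 * real m / 6"
    and kF: "2 * real m / 3 + 2 < real kF" "real kF < 5 * real m / 6"
    and hom: "\<And>a b. fdag_arc m E0 kF a b \<Longrightarrow> Ti_arc n GE m E0 K (g a) (g b)"
    and e: "e \<in> arcsG n GE" and root: "g FZ \<in> ends e"
    and into: "\<forall>v\<in>{1..m}. g (FL v) \<in> nonroot m e"
  shows "K = kF"
proof -
  interpret L: F0_hom_into_Ti m E0 n GE K "\<lambda>v. g (FL v)" using Fdag_hom_on_copies_of_F0(1)[OF hom] .
  obtain N where N: "N = NL e \<or> N = NR e" and side_or_end: "\<forall>v\<in>{1..m}. g (FL v) \<in> N ` {1..m} \<union> ends e"
    using L.one_side[OF e] into by blast
  have side: "\<forall>v\<in>{1..m}. g (FL v) \<in> N ` {1..m}"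
  proof
    fix v assume "v \<in> {1..m}"
    then have "g (FL v) \<in> N ` {1..m} \<union> ends e" "g (FL v) \<in> nonroot m e" using side_or_end into by blast+
    moreover have "x \<notin> nonroot m e" if "x \<in> ends e" for x using that by auto
    ultimately show "g (FL v) \<in> N ` {1..m}" by blast
  qed
  have "\<exists>S \<in> {{1..K}, {Suc K..m}}. \<forall>w\<in>{1..m}.
      (Ti_arc n GE m E0 K (g FZ) (N w) \<longleftrightarrow> w \<in> S) \<and> (Ti_arc n GE m E0 K (N w) (g FZ) \<longleftrightarrow> w \<notin> S)"
    by (rule Ti_arc_end_side[OF e N root])
  then obtain S where S: "S \<in> {{1..K}, {Suc K..m}}" and segment: "\<forall>w\<in>{1..m}.
      (Ti_arc n GE m E0 K (g FZ) (N w) \<longleftrightarrow> w \<in> S) \<and> (Ti_arc n GE m E0 K (N w) (g FZ) \<longleftrightarrow> w \<notin> S)" ..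
  have card_le: "card B \<le> card Q"
    if "B \<subseteq> {1..m}" "Q \<subseteq> {1..m}" "\<forall>v\<in>B. \<forall>w\<in>{1..m}. g (FL v) = N w \<longrightarrow> w \<in> Q" for B Q
  proof -
    have "inj_on (\<lambda>v. g (FL v)) B" using L.hom_inj \<open>B \<subseteq> {1..m}\<close> by (rule inj_on_subset)
    moreover have "(\<lambda>v. g (FL v)) ` B \<subseteq> N ` Q" using that side by blast
    ultimately have "card B \<le> card (N ` Q)"
      using finite_subset[OF \<open>Q \<subseteq> {1..m}\<close>] by (intro card_inj_on_le) auto
    also have "\<dots> \<le> card Q" by (rule card_image_le) (use finite_subset[OF \<open>Q \<subseteq> {1..m}\<close>] in auto)
    finally show ?thesis .
  qed
  have S_sub: "S \<subseteq> {1..m}" using S K by auto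
  have "kF \<le> m" using kF by linarith
  have "Ti_arc n GE m E0 K (g FZ) (g (FL v))" if "v \<in> {1..kF}" for v
    using hom that by simp
  then have "card {1..kF} \<le> card S"
    using S_sub segment \<open>kF \<le> m\<close> by (intro card_le) (auto, metis atLeastAtMost_iff)
  moreover have "Ti_arc n GE m E0 K (g (FL v)) (g FZ)" if "v \<in> {Suc kF..m}" for v
    using hom that by simp
  then have "card {Suc kF..m} \<le> card ({1..m} - S)"
    using segment by (intro card_le) (auto, metis atLeastAtMost_iff)
  moreover have "card ({1..m} - S) = m - card S" using S_sub by (simp add: card_Diff_subset finite_subset)
  moreover have "card S \<le> m" using card_mono[OF finite_atLeastAtMost S_sub] by simp
  ultimately have "card S = kF" using \<open>kF \<le> m\<close> by simp
  moreover have "card S = K \<or> card S = m - K" using S by auto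
  ultimately show ?thesis using K kF by linarith
qed

end

section \<open>Rooted homomorphisms into \<open>T\<^sub>G\<^sup>\<star>\<close>\<close>

fun swap_copies :: "fd \<Rightarrow> fd" where
  "swap_copies FZ = FW" | "swap_copies FW = FZ" | "swap_copies (FL v) = FR v" | "swap_copies (FR v) = FL v"

lemma swap_copies_involution [simp]: "swap_copies (swap_copies a) = a"
  by (cases a) auto

lemma swap_copies_in_Fdag_V: "a \<in> fst (Fdag m E0 K) \<Longrightarrow> swap_copies a \<in> fst (Fdag m E0 K)"
  unfolding Fdag_V_iff by (cases a) auto

lemma fdag_arc_swap_copies: "fdag_arc m E0 K (swap_copies a) (swap_copies b) = fdag_arc m E0 K a b"
  by (cases a; cases b) auto

lemma hom_maps_swap_copies:
  assumes hom: "\<phi> \<in> hom_maps (Fdag m E0 K) T'" and "K \<le> m" "E0 \<subseteq> {1..m} \<times> {1..m}"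
  shows "(\<lambda>u\<in>fst (Fdag m E0 K). \<phi> (swap_copies u)) \<in> hom_maps (Fdag m E0 K) T'"
proof -
  let ?V = "fst (Fdag m E0 K)"
  let ?\<psi> = "\<lambda>u\<in>?V. \<phi> (swap_copies u)"
  have maps: "\<phi> \<in> ?V \<rightarrow>\<^sub>E fst T'" and arcs: "\<forall>(a, b)\<in>snd (Fdag m E0 K). (\<phi> a, \<phi> b) \<in> snd T'"
    using hom unfolding hom_maps_def by auto
  have "(?\<psi> a, ?\<psi> b) \<in> snd T'" if "(a, b) \<in> snd (Fdag m E0 K)" for a b
  proof -
    have ab: "fdag_arc m E0 K a b" using that by (simp add: Fdag_arc_iff)
    then have "a \<in> ?V" "b \<in> ?V" using fdag_arc_in_Fdag_V assms(2,3) by blast+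
    moreover have "(swap_copies a, swap_copies b) \<in> snd (Fdag m E0 K)"
      using ab by (simp add: Fdag_arc_iff fdag_arc_swap_copies)
    ultimately show ?thesis using arcs by auto
  qed
  moreover have "?\<psi> \<in> ?V \<rightarrow>\<^sub>E fst T'" using maps swap_copies_in_Fdag_V by auto
  ultimately show ?thesis unfolding hom_maps_def by blast
qed

lemma finite_hom_maps: "finite (fst T') \<Longrightarrow> finite (hom_maps (Fdag m E0 K) T')"
  unfolding hom_maps_def by (rule finite_subset[OF _ finite_PiE[OF finite_Fdag_V]]) auto

lemma card_rooted_homs_swap_le:
  fixes T' :: "'b digraph"
  assumes "finite (fst T')" "K \<le> m" "E0 \<subseteq> {1..m} \<times> {1..m}"
  shows "card {\<phi> \<in> hom_maps (Fdag m E0 K) T'. \<phi> FZ = x \<and> \<phi> FW = y}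
       \<le> card {\<phi> \<in> hom_maps (Fdag m E0 K) T'. \<phi> FZ = y \<and> \<phi> FW = x}"
proof (rule card_inj_on_le)
  let ?V = "fst (Fdag m E0 K)"
  let ?h = "\<lambda>\<phi>. \<lambda>u\<in>?V. \<phi> (swap_copies u) :: 'b"
  have roots: "FZ \<in> ?V" "FW \<in> ?V" by (auto simp: Fdag_V)
  show "?h ` {\<phi> \<in> hom_maps (Fdag m E0 K) T'. \<phi> FZ = x \<and> \<phi> FW = y}
      \<subseteq> {\<phi> \<in> hom_maps (Fdag m E0 K) T'. \<phi> FZ = y \<and> \<phi> FW = x}"
    using hom_maps_swap_copies[where T'=T', OF _ assms(2,3)] roots by auto
  show "inj_on ?h {\<phi> \<in> hom_maps (Fdag m E0 K) T'. \<phi> FZ = x \<and> \<phi> FW = y}"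
  proof (rule inj_onI)
    fix \<phi> \<psi> assume \<phi>\<psi>: "\<phi> \<in> {\<phi> \<in> hom_maps (Fdag m E0 K) T'. \<phi> FZ = x \<and> \<phi> FW = y}"
      "\<psi> \<in> {\<phi> \<in> hom_maps (Fdag m E0 K) T'. \<phi> FZ = x \<and> \<phi> FW = y}" "?h \<phi> = ?h \<psi>"
    show "\<phi> = \<psi>"
    proof (rule extensionalityI)
      show "\<phi> \<in> extensional ?V" "\<psi> \<in> extensional ?V" using \<phi>\<psi>(1,2) by (auto simp: hom_maps_def PiE_def)
      fix u assume "u \<in> ?V"
      then show "\<phi> u = \<psi> u"
        using fun_cong[OF \<phi>\<psi>(3), of "swap_copies u"] swap_copies_in_Fdag_V by simp
    qed
  qed
qed (use finite_hom_maps[OF assms(1)] in simp)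

text \<open>The arcs of \<open>T\<^sub>i\<close> between the images under \<open>embed e\<close> of two vertices of
  \<open>F\<^sup>\<dagger>\<^sup>\<bullet>\<^sup>\<bullet>\<close>; they do not depend on \<open>e\<close>.\<close>
fun gadget_arc :: "(nat \<times> nat) set \<Rightarrow> nat \<Rightarrow> fd \<Rightarrow> fd \<Rightarrow> bool" where
  "gadget_arc E0 K FZ FW = True"
| "gadget_arc E0 K FW FZ = False"
| "gadget_arc E0 K FZ FZ = False"
| "gadget_arc E0 K FW FW = False"
| "gadget_arc E0 K FZ (FL v) = (v \<le> K)"
| "gadget_arc E0 K (FL v) FZ = (K < v)"
| "gadget_arc E0 K FW (FL v) = (K < v)"
| "gadget_arc E0 K (FL v) FW = (v \<le> K)"
| "gadget_arc E0 K FZ (FR v) = (K < v)"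
| "gadget_arc E0 K (FR v) FZ = (v \<le> K)"
| "gadget_arc E0 K FW (FR v) = (v \<le> K)"
| "gadget_arc E0 K (FR v) FW = (K < v)"
| "gadget_arc E0 K (FL u) (FL v) = ((u, v) \<in> E0)"
| "gadget_arc E0 K (FR u) (FR v) = ((u, v) \<in> E0)"
| "gadget_arc E0 K (FL u) (FR v) = True"
| "gadget_arc E0 K (FR u) (FL v) = False"

lemma Ti_arc_embed:
  assumes "e \<in> arcsG n GE" "a \<in> fst (Fdag m E0 K')" "b \<in> fst (Fdag m E0 K')" "E0 \<subseteq> {1..m} \<times> {1..m}"
  shows "Ti_arc n GE m E0 K (embed e a) (embed e b) = gadget_arc E0 K a b"
proof -
  have e: "1 \<le> fst e" "fst e < snd e" "snd e \<le> n" using arcsG_bounds[OF assms(1)] by auto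
  have E: "(u, v) \<in> E0 \<Longrightarrow> u \<in> {1..m} \<and> v \<in> {1..m}" for u v using assms(4) by auto
  show ?thesis using assms(2,3) e assms(1) unfolding Fdag_V_iff
    by (cases a; cases b) (auto dest: E)
qed

lemma fdag_arc_imp_gadget_arc: "fdag_arc m E0 K a b \<Longrightarrow> gadget_arc E0 K a b"
  by (cases a; cases b) auto

lemma embed_inj: "fst e \<noteq> snd e \<Longrightarrow> embed e a = embed e b \<Longrightarrow> a = b"
  by (cases a; cases b) auto

fun unembed :: "nat \<times> nat \<Rightarrow> tv \<Rightarrow> fd" where
  "unembed e (Rt c) = (if c = fst e then FZ else FW)"
| "unembed e (NL _ w) = FL w"
| "unembed e (NR _ w) = FR w"

definition gadget_homs :: "nat \<Rightarrow> (nat \<times> nat) set \<Rightarrow> nat \<Rightarrow> (fd \<Rightarrow> fd) set" where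
  "gadget_homs m E0 K = {\<psi> \<in> fst (Fdag m E0 K) \<rightarrow>\<^sub>E fst (Fdag m E0 K).
     (\<forall>(a, b)\<in>snd (Fdag m E0 K). gadget_arc E0 K (\<psi> a) (\<psi> b)) \<and> \<psi> FZ = FZ \<and> \<psi> FW = FW}"

lemma Tstar_V_iff: "(i, j, v) \<in> fst (Tstar s r n GE m E0 k) \<longleftrightarrow>
   i \<in> {1..s} \<and> j \<in> {1..r i} \<and> v \<in> Ti_V n GE m"
  by (simp add: Tstar_def Let_def)

lemma Tstar_E_iff: "((i, j, u), (i', j', v)) \<in> snd (Tstar s r n GE m E0 k) \<longleftrightarrow>
   (i = i' \<and> j = j' \<and> i \<in> {1..s} \<and> j \<in> {1..r i} \<and> (u, v) \<in> Ti_E n GE m E0 (k i)) \<or>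
   ((i, j, u) \<in> fst (Tstar s r n GE m E0 k) \<and> (i', j', v) \<in> fst (Tstar s r n GE m E0 k) \<and>
     (i < i' \<or> (i = i' \<and> j < j')))"
  unfolding Tstar_V_iff by (simp add: Tstar_def Let_def) blast

definition copy_index :: "nat \<times> nat \<times> tv \<Rightarrow> nat \<times> nat" where
  "copy_index p = (fst p, fst (snd p))"

locale Tstar_setting = F0_tournament +
  fixes s :: nat and r :: "nat \<Rightarrow> nat" and n :: nat and GE :: "nat set set" and k :: "nat \<Rightarrow> nat"
  assumes valid_ks: "valid_ks s m k"
begin

abbreviation T :: "(nat \<times> nat \<times> tv) digraph" where
  "T \<equiv> Tstar s r n GE m E0 k"

abbreviation copy_arc :: "nat \<Rightarrow> nat \<times> nat \<times> tv \<Rightarrow> nat \<times> nat \<times> tv \<Rightarrow> bool" where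
  "copy_arc i x y \<equiv> \<exists>j\<in>{1..r i}. \<exists>(p, q)\<in>arcsG n GE.
     (x, y) = ((i, j, Rt p), (i, j, Rt q)) \<or> (y, x) = ((i, j, Rt p), (i, j, Rt q))"

lemma k_bounds:
  assumes "i \<in> {1..s}"
  shows "2 * real m / 3 + 2 < real (k i)" "real (k i) < 5 * real m / 6" "1 \<le> k i" "k i < m"
proof -
  show "2 * real m / 3 + 2 < real (k i)" "real (k i) < 5 * real m / 6"
    using valid_ks assms unfolding valid_ks_def by blast+
  then show "1 \<le> k i" "k i < m" by linarith+
qed

lemma k_decreasing: "1 \<le> a \<Longrightarrow> a < b \<Longrightarrow> b \<le> s \<Longrightarrow> k b < k a"
proof (induction b)
  case (Suc b)
  have "k (Suc b) + 1 < k b" using valid_ks Suc.prems unfolding valid_ks_def by auto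
  then show ?case using Suc by (cases "a = b") auto
qed simp

lemma inj_on_k: "inj_on k {1..s}"
  by (rule inj_onI) (metis atLeastAtMost_iff k_decreasing less_irrefl linorder_neqE_nat)

lemma Tstar_arc_iff: "((i, j, u), (i', j', v)) \<in> snd T \<longleftrightarrow>
   (i, j, u) \<in> fst T \<and> (i', j', v) \<in> fst T \<and>
   (if i = i' \<and> j = j' then Ti_arc n GE m E0 (k i) u v else i < i' \<or> (i = i' \<and> j < j'))"
proof (cases "i = i' \<and> j = j'")
  case True
  have "(u, v) \<in> Ti_E n GE m E0 (k i) \<longleftrightarrow> Ti_arc n GE m E0 (k i) u v" if "i \<in> {1..s}"
    using Ti_E_iff[OF E0_subset] k_bounds(4)[OF that] by simp
  then show ?thesis using True unfolding Tstar_E_iff Tstar_V_iff by (auto dest: Ti_arc_in_Ti_V)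
qed (auto simp: Tstar_E_iff)

lemma Tstar_arc_copy_index: "(p, q) \<in> snd T \<Longrightarrow> copy_index p \<le> copy_index q"
  by (cases p; cases q) (auto simp: Tstar_arc_iff copy_index_def less_eq_prod_def split: if_splits)

text \<open>Every vertex of \<open>F\<^sup>\<dagger>\<^sup>\<bullet>\<^sup>\<bullet>\<close> lies on a closed walk through \<open>z\<close>, while arcs of
  \<open>T\<^sub>G\<^sup>\<star>\<close> never go back to an earlier copy.\<close>
lemma hom_same_copy:
  assumes hom: "\<phi> \<in> hom_maps (Fdag m E0 K) T" and K: "1 \<le> K" "K < m"
    and u: "u \<in> fst (Fdag m E0 K)"
  shows "copy_index (\<phi> u) = copy_index (\<phi> FZ)"
proof -
  let ?c = "\<lambda>a. copy_index (\<phi> a)"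
  have arc: "?c a \<le> ?c b" if "fdag_arc m E0 K a b" for a b
    using that hom Tstar_arc_copy_index unfolding hom_maps_def Fdag_arc_iff[symmetric] by blast
  have "?c FZ \<le> ?c (FL 1)" "?c (FL 1) \<le> ?c FW" "?c FW \<le> ?c (FL m)" "?c (FL m) \<le> ?c FZ"
    using K by (auto intro!: arc)
  then have roots: "?c FW = ?c FZ" by simp
  consider "u = FZ" | "u = FW" | v where "u = FL v" "v \<in> {1..m}" | v where "u = FR v" "v \<in> {1..m}"
    using u unfolding Fdag_V_iff by blast
  then have "?c FZ \<le> ?c u \<and> ?c u \<le> ?c FW \<or> ?c FW \<le> ?c u \<and> ?c u \<le> ?c FZ"
  proof cases
    case (3 v)
    then show ?thesis by (cases "v \<le> K") (auto intro!: arc)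
  next
    case (4 v)
    then show ?thesis by (cases "v \<le> K") (auto intro!: arc)
  qed (use roots in auto)
  then show ?thesis using roots by (metis order_antisym)
qed

lemma hom_into_one_copy:
  assumes hom: "\<phi> \<in> hom_maps (Fdag m E0 K) T" and K: "1 \<le> K" "K < m"
  defines "i \<equiv> fst (\<phi> FZ)" and "j \<equiv> fst (snd (\<phi> FZ))"
  shows "\<forall>u\<in>fst (Fdag m E0 K). \<phi> u = (i, j, snd (snd (\<phi> u)))" "i \<in> {1..s}" "j \<in> {1..r i}"
    "\<And>a b. fdag_arc m E0 K a b \<Longrightarrow> Ti_arc n GE m E0 (k i) (snd (snd (\<phi> a))) (snd (snd (\<phi> b)))"
proof -
  show copy: "\<forall>u\<in>fst (Fdag m E0 K). \<phi> u = (i, j, snd (snd (\<phi> u)))"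
    using hom_same_copy[OF hom K] unfolding i_def j_def copy_index_def by (metis prod.collapse prod.inject)
  have "\<phi> FZ \<in> fst T" using hom unfolding hom_maps_def by (auto simp: Fdag_V)
  then show "i \<in> {1..s}" "j \<in> {1..r i}" unfolding i_def j_def by (metis Tstar_V_iff prod.collapse)+
  fix a b assume ab: "fdag_arc m E0 K a b"
  then have "a \<in> fst (Fdag m E0 K)" "b \<in> fst (Fdag m E0 K)"
    using fdag_arc_in_Fdag_V[OF ab _ E0_subset] K by auto
  moreover have "(\<phi> a, \<phi> b) \<in> snd T" using ab hom unfolding hom_maps_def Fdag_arc_iff[symmetric] by blast
  ultimately have "((i, j, snd (snd (\<phi> a))), (i, j, snd (snd (\<phi> b)))) \<in> snd T" using copy by metis
  then show "Ti_arc n GE m E0 (k i) (snd (snd (\<phi> a))) (snd (snd (\<phi> b)))" unfolding Tstar_arc_iff by simp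
qed

text \<open>The parameter \<open>k\<^sub>i\<^sub>'\<close> of the copy receiving the image must equal \<open>k\<^sub>i\<close>, and the
  \<open>k\<^sub>i\<close> are distinct.\<close>
lemma hom_structure:
  assumes i: "i \<in> {1..s}" and hom: "\<phi> \<in> hom_maps (Fdag m E0 (k i)) T"
  shows "\<exists>j\<in>{1..r i}. \<exists>e\<in>arcsG n GE.
     (\<forall>u\<in>fst (Fdag m E0 (k i)). \<phi> u = (i, j, snd (snd (\<phi> u)))) \<and>
     ((\<phi> FZ = (i, j, Rt (fst e)) \<and> \<phi> FW = (i, j, Rt (snd e))) \<or>
      (\<phi> FZ = (i, j, Rt (snd e)) \<and> \<phi> FW = (i, j, Rt (fst e)))) \<and>
     (\<forall>v\<in>{1..m}. snd (snd (\<phi> (FL v))) \<in> nonroot m e \<and> snd (snd (\<phi> (FR v))) \<in> nonroot m e)"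
proof -
  define i' where "i' = fst (\<phi> FZ)"
  define j where "j = fst (snd (\<phi> FZ))"
  define g where "g u = snd (snd (\<phi> u))" for u
  note copy = hom_into_one_copy[OF hom k_bounds(3,4)[OF i], folded i'_def j_def g_def]
  obtain e where e: "e \<in> arcsG n GE"
    and ends: "(g FZ = Rt (fst e) \<and> g FW = Rt (snd e)) \<or> (g FZ = Rt (snd e) \<and> g FW = Rt (fst e))"
    and inside: "\<forall>v\<in>{1..m}. g (FL v) \<in> nonroot m e \<and> g (FR v) \<in> nonroot m e"
    using Fdag_hom_into_gadget[where g=g, OF k_bounds(1,2)[OF i] copy(4)] by blast
  have "k i' = k i"
    using Fdag_hom_parameter[where g=g, OF k_bounds(1,2)[OF copy(2)] k_bounds(1,2)[OF i] copy(4) e]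
      ends inside by auto
  then have "i' = i" using inj_on_k copy(2) i by (auto dest: inj_onD)
  moreover have "FZ \<in> fst (Fdag m E0 (k i))" "FW \<in> fst (Fdag m E0 (k i))" by (auto simp: Fdag_V)
  ultimately show ?thesis
    using copy(1,3) e ends inside unfolding g_def by (intro bexI[of _ j] bexI[of _ e]) auto
qed

lemma embed_in_Ti_V: "e \<in> arcsG n GE \<Longrightarrow> w \<in> fst (Fdag m E0 K') \<Longrightarrow> embed e w \<in> Ti_V n GE m"
  unfolding Fdag_V_iff using arcsG_bounds[of e n GE] by (cases w) auto

definition lift_gadget_hom :: "nat \<Rightarrow> nat \<Rightarrow> nat \<times> nat \<Rightarrow> (fd \<Rightarrow> fd) \<Rightarrow> fd \<Rightarrow> nat \<times> nat \<times> tv" where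
  "lift_gadget_hom i j e \<psi> = (\<lambda>u\<in>fst (Fdag m E0 (k i)). (i, j, embed e (\<psi> u)))"

lemma lift_gadget_hom_rooted:
  assumes i: "i \<in> {1..s}" and j: "j \<in> {1..r i}" and e: "e \<in> arcsG n GE"
    and \<psi>: "\<psi> \<in> gadget_homs m E0 (k i)"
  shows "lift_gadget_hom i j e \<psi> \<in> hom_maps (Fdag m E0 (k i)) T"
    "lift_gadget_hom i j e \<psi> FZ = (i, j, Rt (fst e))" "lift_gadget_hom i j e \<psi> FW = (i, j, Rt (snd e))"
proof -
  let ?F = "Fdag m E0 (k i)"
  let ?L = "lift_gadget_hom i j e \<psi>"
  have maps: "\<psi> \<in> fst ?F \<rightarrow>\<^sub>E fst ?F" and arcs: "\<forall>(a, b)\<in>snd ?F. gadget_arc E0 (k i) (\<psi> a) (\<psi> b)"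
    and roots: "\<psi> FZ = FZ" "\<psi> FW = FW"
    using \<psi> unfolding gadget_homs_def by auto
  have in_T: "(i, j, embed e w) \<in> fst T" if "w \<in> fst ?F" for w
    using embed_in_Ti_V[OF e that] i j unfolding Tstar_V_iff by blast
  have "(?L a, ?L b) \<in> snd T" if ab: "(a, b) \<in> snd ?F" for a b
  proof -
    have "a \<in> fst ?F" "b \<in> fst ?F"
      using fdag_arc_in_Fdag_V[OF _ _ E0_subset] k_bounds(4)[OF i] ab by (auto simp: Fdag_arc_iff)
    moreover have "\<psi> a \<in> fst ?F" "\<psi> b \<in> fst ?F" using maps calculation by auto
    moreover have "gadget_arc E0 (k i) (\<psi> a) (\<psi> b)" using arcs ab by auto
    then have "Ti_arc n GE m E0 (k i) (embed e (\<psi> a)) (embed e (\<psi> b))"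
      using Ti_arc_embed[OF e calculation(3,4) E0_subset] by simp
    ultimately show ?thesis using in_T by (auto simp: lift_gadget_hom_def Tstar_arc_iff)
  qed
  moreover have "?L \<in> fst ?F \<rightarrow>\<^sub>E fst T" using maps in_T by (auto simp: lift_gadget_hom_def)
  ultimately show "?L \<in> hom_maps ?F T" unfolding hom_maps_def by auto
  show "?L FZ = (i, j, Rt (fst e))" "?L FW = (i, j, Rt (snd e))"
    using roots by (auto simp: lift_gadget_hom_def Fdag_V)
qed

lemma rooted_hom_is_lift:
  assumes i: "i \<in> {1..s}" and e: "e \<in> arcsG n GE"
    and hom: "\<phi> \<in> hom_maps (Fdag m E0 (k i)) T"
    and roots: "\<phi> FZ = (i, j, Rt (fst e))" "\<phi> FW = (i, j, Rt (snd e))"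
  shows "\<exists>\<psi>\<in>gadget_homs m E0 (k i). \<phi> = lift_gadget_hom i j e \<psi>"
proof -
  let ?F = "Fdag m E0 (k i)"
  define g where "g u = snd (snd (\<phi> u))" for u
  obtain j' e' where "j' \<in> {1..r i}" "e' \<in> arcsG n GE"
    and copy: "\<forall>u\<in>fst ?F. \<phi> u = (i, j', g u)"
    and ends: "(\<phi> FZ = (i, j', Rt (fst e')) \<and> \<phi> FW = (i, j', Rt (snd e'))) \<or>
      (\<phi> FZ = (i, j', Rt (snd e')) \<and> \<phi> FW = (i, j', Rt (fst e')))"
    and inside: "\<forall>v\<in>{1..m}. g (FL v) \<in> nonroot m e' \<and> g (FR v) \<in> nonroot m e'"
    using hom_structure[OF i hom] unfolding g_def by blast
  have "j' = j" "e' = e"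
    using ends roots arcsG_bounds[OF e] arcsG_bounds[OF \<open>e' \<in> arcsG n GE\<close>] by (auto simp: prod_eq_iff)
  note copy = copy[unfolded \<open>j' = j\<close>] and inside = inside[unfolded \<open>e' = e\<close>]
  have "fst e \<noteq> snd e" using arcsG_bounds[OF e] by simp
  define \<psi> where "\<psi> = (\<lambda>u\<in>fst ?F. unembed e (g u))"
  have unembed: "\<psi> u \<in> fst ?F \<and> embed e (\<psi> u) = g u" if u: "u \<in> fst ?F" for u
  proof -
    consider "u = FZ" | "u = FW" | v where "u = FL v" "v \<in> {1..m}" | v where "u = FR v" "v \<in> {1..m}"
      using u unfolding Fdag_V_iff by blast
    then show ?thesis
    proof cases
      case (3 v)
      then have "g u \<in> nonroot m e" using inside by auto
      then show ?thesis using u 3 unfolding \<psi>_def by (cases "g u") (auto simp: Fdag_V_iff)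
    next
      case (4 v)
      then have "g u \<in> nonroot m e" using inside by auto
      then show ?thesis using u 4 unfolding \<psi>_def by (cases "g u") (auto simp: Fdag_V_iff)
    qed (use roots u \<open>fst e \<noteq> snd e\<close> in \<open>auto simp: \<psi>_def g_def\<close>)
  qed
  have "\<psi> \<in> gadget_homs m E0 (k i)"
    unfolding gadget_homs_def
  proof (intro CollectI conjI)
    show "\<psi> \<in> fst ?F \<rightarrow>\<^sub>E fst ?F" using unembed unfolding \<psi>_def by auto
    show "\<psi> FZ = FZ" "\<psi> FW = FW" using roots \<open>fst e \<noteq> snd e\<close> by (auto simp: \<psi>_def g_def Fdag_V)
    show "\<forall>(a, b)\<in>snd ?F. gadget_arc E0 (k i) (\<psi> a) (\<psi> b)"
    proof clarify
      fix a b assume ab: "(a, b) \<in> snd ?F"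
      then have V: "a \<in> fst ?F" "b \<in> fst ?F"
        using fdag_arc_in_Fdag_V[OF _ _ E0_subset] k_bounds(4)[OF i] by (auto simp: Fdag_arc_iff)
      have "(\<phi> a, \<phi> b) \<in> snd T" using hom ab unfolding hom_maps_def by blast
      then have "Ti_arc n GE m E0 (k i) (embed e (\<psi> a)) (embed e (\<psi> b))"
        using copy unembed V by (simp add: Tstar_arc_iff)
      then show "gadget_arc E0 (k i) (\<psi> a) (\<psi> b)" using Ti_arc_embed[OF e _ _ E0_subset] unembed V by blast
    qed
  qed
  moreover have "\<phi> = lift_gadget_hom i j e \<psi>"
  proof (rule extensionalityI)
    show "\<phi> \<in> extensional (fst ?F)" using hom unfolding hom_maps_def by (auto simp: PiE_def)
    show "lift_gadget_hom i j e \<psi> \<in> extensional (fst ?F)" by (simp add: lift_gadget_hom_def)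
    show "\<phi> u = lift_gadget_hom i j e \<psi> u" if "u \<in> fst ?F" for u
      using copy unembed that by (simp add: lift_gadget_hom_def)
  qed
  ultimately show ?thesis by blast
qed

lemma inj_on_lift_gadget_hom:
  assumes "e \<in> arcsG n GE" shows "inj_on (lift_gadget_hom i j e) (gadget_homs m E0 (k i))"
proof (rule inj_onI)
  fix \<psi>1 \<psi>2 assume \<psi>: "\<psi>1 \<in> gadget_homs m E0 (k i)" "\<psi>2 \<in> gadget_homs m E0 (k i)"
    and lift: "lift_gadget_hom i j e \<psi>1 = lift_gadget_hom i j e \<psi>2"
  have "fst e \<noteq> snd e" using arcsG_bounds[OF assms] by simp
  show "\<psi>1 = \<psi>2"
  proof (rule extensionalityI)
    show "\<psi>1 \<in> extensional (fst (Fdag m E0 (k i)))" "\<psi>2 \<in> extensional (fst (Fdag m E0 (k i)))"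
      using \<psi> unfolding gadget_homs_def by (auto simp: PiE_def)
    fix u assume "u \<in> fst (Fdag m E0 (k i))"
    then have "embed e (\<psi>1 u) = embed e (\<psi>2 u)"
      using fun_cong[OF lift, of u] by (simp add: lift_gadget_hom_def)
    then show "\<psi>1 u = \<psi>2 u" using embed_inj \<open>fst e \<noteq> snd e\<close> by blast
  qed
qed

lemma card_rooted_homs_at_arc:
  assumes i: "i \<in> {1..s}" and j: "j \<in> {1..r i}" and e: "e \<in> arcsG n GE"
  shows "hom_rooted (Fdag m E0 (k i)) FZ FW T (i, j, Rt (fst e)) (i, j, Rt (snd e)) = card (gadget_homs m E0 (k i))"
proof -
  have "{\<phi> \<in> hom_maps (Fdag m E0 (k i)) T. \<phi> FZ = (i, j, Rt (fst e)) \<and> \<phi> FW = (i, j, Rt (snd e))}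
      = lift_gadget_hom i j e ` gadget_homs m E0 (k i)"
    using lift_gadget_hom_rooted[OF i j e] rooted_hom_is_lift[OF i e] by blast
  then show ?thesis unfolding hom_rooted_def using card_image[OF inj_on_lift_gadget_hom[OF e]] by simp
qed

lemma gadget_homs_nonempty: "i \<in> {1..s} \<Longrightarrow> 0 < card (gadget_homs m E0 (k i))"
proof -
  assume i: "i \<in> {1..s}"
  let ?V = "fst (Fdag m E0 (k i))"
  have "finite (?V \<rightarrow>\<^sub>E ?V)" by (intro finite_PiE finite_Fdag_V)
  then have "finite (gadget_homs m E0 (k i))" unfolding gadget_homs_def by (rule rev_finite_subset) auto
  moreover have "restrict id ?V \<in> gadget_homs m E0 (k i)"
  proof -
    have "\<forall>(a, b)\<in>snd (Fdag m E0 (k i)). gadget_arc E0 (k i) (restrict id ?V a) (restrict id ?V b)"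
    proof clarify
      fix a b assume "(a, b) \<in> snd (Fdag m E0 (k i))"
      then have ab: "fdag_arc m E0 (k i) a b" by (simp add: Fdag_arc_iff)
      then show "gadget_arc E0 (k i) (restrict id ?V a) (restrict id ?V b)"
        using fdag_arc_in_Fdag_V[OF ab _ E0_subset] k_bounds(4)[OF i] fdag_arc_imp_gadget_arc[OF ab] by simp
    qed
    moreover have "FZ \<in> ?V" "FW \<in> ?V" by (auto simp: Fdag_V)
    ultimately show ?thesis unfolding gadget_homs_def by auto
  qed
  ultimately show ?thesis using card_gt_0_iff by blast
qed

lemma finite_Tstar_V: "finite (fst T)"
proof -
  have "finite (arcsG n GE)" by (rule finite_subset[of _ "{1..n} \<times> {1..n}"]) (auto simp: arcsG_def)
  then have "finite (Ti_V n GE m)" unfolding Ti_V_def nonroot_def by auto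
  then have "finite ({1..s} \<times> (\<Union>i\<in>{1..s}. {1..r i}) \<times> Ti_V n GE m)" by auto
  moreover have "fst T \<subseteq> {1..s} \<times> (\<Union>i\<in>{1..s}. {1..r i}) \<times> Ti_V n GE m"
    using Tstar_V_iff by fastforce
  ultimately show ?thesis by (rule rev_finite_subset)
qed

lemma hom_rooted_swap:
  assumes "i \<in> {1..s}"
  shows "hom_rooted (Fdag m E0 (k i)) FZ FW T x y = hom_rooted (Fdag m E0 (k i)) FZ FW T y x"
  using card_rooted_homs_swap_le[OF finite_Tstar_V _ E0_subset] k_bounds(4)[OF assms]
  unfolding hom_rooted_def by (meson le_antisym less_imp_le)

lemma hom_rooted_value:
  assumes i: "i \<in> {1..s}"
  shows "hom_rooted (Fdag m E0 (k i)) FZ FW T x y =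
     (if copy_arc i x y then card (gadget_homs m E0 (k i)) else 0)"
proof (cases "copy_arc i x y")
  case True
  then obtain j p q where jpq: "j \<in> {1..r i}" "(p, q) \<in> arcsG n GE"
    and "(x, y) = ((i, j, Rt p), (i, j, Rt q)) \<or> (y, x) = ((i, j, Rt p), (i, j, Rt q))" by blast
  then have "hom_rooted (Fdag m E0 (k i)) FZ FW T x y = card (gadget_homs m E0 (k i))"
    using card_rooted_homs_at_arc[OF i jpq] hom_rooted_swap[OF i, of x y] by auto
  then show ?thesis by (simp only: True if_True)
next
  case False
  have "\<not> (\<phi> \<in> hom_maps (Fdag m E0 (k i)) T \<and> \<phi> FZ = x \<and> \<phi> FW = y)" for \<phi>
  proof
    assume \<phi>: "\<phi> \<in> hom_maps (Fdag m E0 (k i)) T \<and> \<phi> FZ = x \<and> \<phi> FW = y"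
    then obtain j p q where "j \<in> {1..r i}" "(p, q) \<in> arcsG n GE"
      "(\<phi> FZ = (i, j, Rt p) \<and> \<phi> FW = (i, j, Rt q)) \<or> (\<phi> FZ = (i, j, Rt q) \<and> \<phi> FW = (i, j, Rt p))"
      using hom_structure[OF i] by (metis prod.collapse)
    then have "copy_arc i x y" using \<phi> by blast
    then show False using False by contradiction
  qed
  then have "{\<phi> \<in> hom_maps (Fdag m E0 (k i)) T. \<phi> FZ = x \<and> \<phi> FW = y} = {}" by blast
  then have "hom_rooted (Fdag m E0 (k i)) FZ FW T x y = 0" unfolding hom_rooted_def by (metis card.empty)
  then show ?thesis by (simp only: False if_False)
qed

lemma t_rooted_value:
  assumes i: "i \<in> {1..s}"
  shows "\<exists>a::real. a > 0 \<and> (\<forall>x\<in>fst T. \<forall>y\<in>fst T.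
           t_rooted (Fdag m E0 (k i)) FZ FW T x y = (if copy_arc i x y then a else 0))"
proof -
  define a where "a = (if card (fst T) = 0 then 1
    else real (card (gadget_homs m E0 (k i))) / real (card (fst T)) ^ (card (fst (Fdag m E0 (k i))) - 2))"
  show ?thesis
  proof (intro exI[of _ a] conjI ballI)
    show "a > 0" using gadget_homs_nonempty[OF i] by (simp add: a_def)
    fix x y assume "x \<in> fst T"
    then have "(card (fst T) = 0) = False" using finite_Tstar_V by auto
    then show "t_rooted (Fdag m E0 (k i)) FZ FW T x y = (if copy_arc i x y then a else 0)"
      unfolding t_rooted_def hom_rooted_value[OF i] a_def
      by (cases "copy_arc i x y") (simp_all only: if_True if_False of_nat_0 div_0)
  qed
qed

end

theorem lemma4p8:
  fixes s :: nat
  assumes "0 < s"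
  shows "\<exists>M. \<forall>m \<ge> M. \<forall>E0 k. is_F0 m E0 \<and> valid_ks s m k \<longrightarrow>
           (\<forall>n GE r. is_graph n GE \<and> (\<forall>i\<in>{1..s}. 0 < r i) \<longrightarrow>
             (let T = Tstar s r n GE m E0 k in
              \<forall>i\<in>{1..s}. \<exists>a::real. a > 0 \<and>
                (\<forall>x\<in>fst T. \<forall>y\<in>fst T.
                   t_rooted (Fdag m E0 (k i)) FZ FW T x y =
                     (if \<exists>j\<in>{1..r i}. \<exists>(p, q)\<in>arcsG n GE.
                            (x, y) = ((i, j, Rt p), (i, j, Rt q)) \<or>
                            (y, x) = ((i, j, Rt p), (i, j, Rt q))
                      then a else 0))))"
proof (intro exI[of _ 400] allI impI, elim conjE)
  fix m :: nat and E0 k n GE and r :: "nat \<Rightarrow> nat"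
  assume "400 \<le> m" "is_F0 m E0" "valid_ks s m k"
  then interpret Tstar_setting m E0 s r n GE k by unfold_locales
  show "let T = Tstar s r n GE m E0 k in \<forall>i\<in>{1..s}. \<exists>a::real. a > 0 \<and> (\<forall>x\<in>fst T. \<forall>y\<in>fst T.
      t_rooted (Fdag m E0 (k i)) FZ FW T x y = (if copy_arc i x y then a else 0))"
    unfolding Let_def by (intro ballI t_rooted_value)
qed

end
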